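(* Let $\sigma\in(0,1)$. In the setting described in the context, there are $B_h>0$, $h\le H+G$, such that for all sufficiently large $T$ and every $h\le H+G$, \[ (-1)^{\mathrm{j}(h)}\sum_p\frac{\mathrm{Re}\left(\overline{r(p)}a_{L_h}(p)\right)}{(1+|r(p)|^2)p^\sigma}\le-B_h\frac{(\log T)^{1-\sigma}}{\log\log T}, \] where $\mathrm{j}(h)=1$ if $h\le H$ and $\mathrm{j}(h)=0$ if $H<h\le H+G$. For $\sigma=1$ the same holds with the right-hand side replaced by $-B_h\log\log\log T$.
   Context: $\mathcal{S}_{\text{poly}}$: Dirichlet series $L(s)=\sum a_L(n)n^{-s}$, $a_L(1)=1$, absolutely convergent for $\mathrm{Re}\,s>1$, with $(s-1)^mL(s)$ entire of finite order, functional equation $L(s)\gamma(s)=\omega\overline{\gamma(1-\bar s)L(1-\bar s)}$, $\gamma(s)=Q^s\prod_k\Gamma(\lambda_ks+\mu_k)$, and Euler product $\prod_p\prod_{j\le\partial_L}(1-a_{L,j}(p)p^{-s})^{-1}$ with $a_{L,j}(p)\ll p^{\theta_L}$, $\theta_L<1/4$; Ramanujan Hypothesis: $a_L(n)\ll_\epsilon n^\epsilon$. Setting: integers $H,G\ge0$; $L_1,\dots,L_{H+G}\in\mathcal{S}_{\text{poly}}$ satisfying the Ramanujan Hypothesis with $\frac{\log x}{x}\sum_{p\le x}a_{L_h}(p)\overline{a_{L_g}(p)}\to\kappa(h,g)$, $\kappa(h,h)>0$, $\kappa(h,g)=0$ for $h\ne g$. Fix $\alpha\in(0,1)$, $0<\beta<\alpha/2$,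 a sufficiently small $\epsilon>0$, a sufficiently large constant $C$, and $x_\epsilon$ large enough that for $x\ge x_\epsilon$ and all $h$: $|\sum_{p\le x}|a_{L_h}(p)|^2-\kappa(h,h)\frac{x}{\log x}|\le\frac{\epsilon x}{\log x}$ and $|\sum_{g\ne h}\sum_{p\le x}a_{L_h}(p)a_{L_g}(p)|\le\frac{\epsilon x}{\log x}$. $r(p)$ is defined for primes by $Cr(p)=\sum_{h\le H}a_{L_h}(p)-\sum_{H<h\le H+G}a_{L_h}(p)$ if $x_\epsilon\le p\le\beta\log T$ and $r(p)=0$ otherwise. *)

theory Defs
  imports "HOL-Analysis.Analysis"
begin

definition dser :: "(nat \<Rightarrow> complex) \<Rightarrow> complex \<Rightarrow> complex" where
  "dser a s = (\<Sum>n. a (Suc n) / of_nat (Suc n) powr s)"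

definition gamma_factor :: "real \<Rightarrow> nat \<Rightarrow> (nat \<Rightarrow> real) \<Rightarrow> (nat \<Rightarrow> complex) \<Rightarrow> complex \<Rightarrow> complex" where
  "gamma_factor Q K lam mu s = of_real Q powr s * (\<Prod>k<K. Gamma (of_real (lam k) * s + mu k))"

text \<open>The class S_poly, as a predicate on the coefficient sequence a_L (a L = a_L(n), n >= 1).
  L(s) is the meromorphic function F(s)/(s-1)^m, where F is the entire function (s-1)^m L(s).
  The functional equation is required on the (open dense) set where all Gamma factors
  on both sides are finite and s is not 0 or 1.\<close>
definition S_poly :: "(nat \<Rightarrow> complex) \<Rightarrow> bool" where
  "S_poly a \<longleftrightarrow>
     a 1 = 1 \<and>
     (\<forall>s. 1 < Re s \<longrightarrow> summable (\<lambda>n. norm (a (Suc n) / of_nat (Suc n) powr s))) \<and>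
     (\<exists>(m::nat) F. F holomorphic_on UNIV \<and>
        (\<forall>s. 1 < Re s \<longrightarrow> F s = (s - 1) ^ m * dser a s) \<and>
        (\<exists>A B. \<forall>s. norm (F s) \<le> B * exp (norm s powr A)) \<and>
        (\<exists>Q K lam mu \<omega>. Q > 0 \<and> (\<forall>k<K. lam k > 0 \<and> Re (mu k) \<ge> 0) \<and> norm \<omega> = 1 \<and>
           (\<forall>s. s \<noteq> 0 \<and> s \<noteq> 1 \<and>
                (\<forall>k<K. of_real (lam k) * s + mu k \<notin> \<int>\<^sub>\<le>\<^sub>0 \<and>
                        of_real (lam k) * (1 - cnj s) + mu k \<notin> \<int>\<^sub>\<le>\<^sub>0) \<longrightarrow>
              (F s / (s - 1) ^ m) * gamma_factor Q K lam mu s =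
              \<omega> * cnj (gamma_factor Q K lam mu (1 - cnj s) *
                        (F (1 - cnj s) / ((1 - cnj s) - 1) ^ m))))) \<and>
     (\<exists>(d::nat) (\<alpha>::nat \<Rightarrow> nat \<Rightarrow> complex) (\<theta>::real) c. \<theta> < 1/4 \<and>
        (\<forall>p j. prime p \<and> j < d \<longrightarrow> norm (\<alpha> p j) \<le> c * real p powr \<theta>) \<and>
        (\<forall>s. 1 < Re s \<longrightarrow>
           (\<lambda>n. if prime n then (\<Prod>j<d. inverse (1 - \<alpha> n j / of_nat n powr s)) else 1)
             has_prod dser a s))"

definition ramanujan :: "(nat \<Rightarrow> complex) \<Rightarrow> bool" where
  "ramanujan a \<longleftrightarrow> (\<forall>\<epsilon>>0. \<exists>c. \<forall>n\<ge>1. norm (a n) \<le> c * real n powr \<epsilon>)"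

definition rcoef :: "(nat \<Rightarrow> nat \<Rightarrow> complex) \<Rightarrow> nat \<Rightarrow> nat \<Rightarrow> real \<Rightarrow> real \<Rightarrow> real \<Rightarrow> real \<Rightarrow> nat \<Rightarrow> complex" where
  "rcoef a H G C xe \<beta> T p =
     (if prime p \<and> xe \<le> real p \<and> real p \<le> \<beta> * ln T
      then ((\<Sum>h\<in>{1..H}. a h p) - (\<Sum>h\<in>{H<..H+G}. a h p)) / of_real C
      else 0)"

end

theory Submission
  imports Defs "HOL-Real_Asymp.Real_Asymp"
begin

text \<open>The term \<open>n = 0\<close> contributes nothing, since \<open>0 powr s = 0\<close> and \<open>x / 0 = 0\<close>.\<close>

definition dirichlet_sum :: "(nat \<Rightarrow> complex) \<Rightarrow> real \<Rightarrow> complex" where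
  "dirichlet_sum c s = (\<Sum>\<^sub>\<infinity>n. c n / of_real (real n powr s))"

definition dirichlet_summable :: "(nat \<Rightarrow> complex) \<Rightarrow> real \<Rightarrow> bool" where
  "dirichlet_summable c s \<longleftrightarrow> (\<lambda>n. c n / of_real (real n powr s)) summable_on UNIV"

lemma dirichlet_summable_norm:
  assumes "dirichlet_summable c s"
  shows "(\<lambda>n. norm (c n) / real n powr s) summable_on UNIV"
proof -
  have "(\<lambda>n. norm (c n / of_real (real n powr s))) summable_on UNIV"
    using assms unfolding dirichlet_summable_def by (subst (asm) summable_on_iff_abs_summable_on_complex)
  then show ?thesis by (simp add: norm_divide)
qed

lemma powr_tendsto_zero_at_top:
  fixes x :: real
  assumes "0 < x" "x < 1"
  shows "((\<lambda>s. x powr s) \<longlongrightarrow> 0) at_top"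
proof -
  have "LIM s at_top. ln x * s :> at_bot"
    by (rule filterlim_tendsto_neg_mult_at_bot[OF tendsto_const]) (use assms in \<open>auto intro: filterlim_ident\<close>)
  then have "((\<lambda>s. exp (ln x * s)) \<longlongrightarrow> 0) at_top"
    using exp_at_bot filterlim_compose by blast
  then show ?thesis using assms by (simp add: powr_def mult.commute)
qed

lemma norm_dirichlet_tail_le:
  assumes s1: "dirichlet_summable c s1" and s: "dirichlet_summable c s" "s1 \<le> s"
  shows "norm (\<Sum>\<^sub>\<infinity>n\<in>{m<..}. c n / of_real (real n powr s))
           \<le> real (Suc m) powr (s1 - s) * (\<Sum>\<^sub>\<infinity>n. norm (c n) / real n powr s1)"
proof -
  define g where "g n = norm (c n) / real n powr s1" for n
  have g: "g summable_on UNIV"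
    unfolding g_def by (rule dirichlet_summable_norm[OF s1])
  have tail: "(\<lambda>n. norm (c n / of_real (real n powr s))) summable_on {m<..}"
    using summable_on_subset_banach[OF dirichlet_summable_norm[OF s(1)], of "{m<..}"] by (simp add: norm_divide)
  have "norm (\<Sum>\<^sub>\<infinity>n\<in>{m<..}. c n / of_real (real n powr s))
          \<le> (\<Sum>\<^sub>\<infinity>n\<in>{m<..}. norm (c n / of_real (real n powr s)))"
    by (rule norm_infsum_bound) (use tail in simp)
  also have "\<dots> \<le> (\<Sum>\<^sub>\<infinity>n\<in>{m<..}. real (Suc m) powr (s1 - s) * g n)"
  proof (rule infsum_mono)
    show "(\<lambda>n. real (Suc m) powr (s1 - s) * g n) summable_on {m<..}"
      by (intro summable_on_cmult_right summable_on_subset_banach[OF g]) auto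
    fix n assume "n \<in> {m<..}"
    then have n: "real (Suc m) \<le> real n" "0 < real n" by auto
    have "real n powr (s1 - s) \<le> real (Suc m) powr (s1 - s)"
      by (rule powr_mono2') (use n s in auto)
    then have "g n * real n powr (s1 - s) \<le> g n * real (Suc m) powr (s1 - s)"
      by (intro mult_left_mono) (auto simp: g_def)
    moreover have "norm (c n / of_real (real n powr s)) = g n * real n powr (s1 - s)"
      using n by (simp add: g_def norm_divide powr_diff)
    ultimately show "norm (c n / of_real (real n powr s)) \<le> real (Suc m) powr (s1 - s) * g n"
      by (simp add: mult.commute)
  qed (use tail in simp)
  also have "\<dots> = real (Suc m) powr (s1 - s) * (\<Sum>\<^sub>\<infinity>n\<in>{m<..}. g n)"
    by (rule infsum_cmult_right) (intro summable_on_subset_banach[OF g], auto)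
  also have "\<dots> \<le> real (Suc m) powr (s1 - s) * (\<Sum>\<^sub>\<infinity>n. g n)"
    by (intro mult_left_mono infsum_mono_neutral g summable_on_subset_banach[OF g]) (auto simp: g_def)
  finally show ?thesis by (simp add: g_def)
qed

lemma dirichlet_sum_eq_leading_term:
  assumes c: "dirichlet_summable c s" and one: "c 1 = 1"
    and below: "\<And>n. 2 \<le> n \<Longrightarrow> n < m \<Longrightarrow> c n = 0" and m: "2 \<le> m"
  shows "c m / of_real (real m powr s)
           = dirichlet_sum c s - 1 - (\<Sum>\<^sub>\<infinity>n\<in>{m<..}. c n / of_real (real n powr s))"
proof -
  let ?f = "\<lambda>n. c n / of_real (real n powr s)"
  have f: "?f summable_on UNIV"
    using c unfolding dirichlet_summable_def .
  have "(\<Sum>n\<le>m. ?f n) = (\<Sum>n\<le>m. (if n = 1 then 1 else 0) + (if n = m then ?f m else 0))"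
    using below one m by (intro sum.cong) auto
  then have head: "(\<Sum>n\<le>m. ?f n) = 1 + ?f m"
    using m by (simp add: sum.distrib)
  have "{..m} \<union> {m<..} = UNIV" by auto
  then have "dirichlet_sum c s = infsum ?f ({..m} \<union> {m<..})"
    unfolding dirichlet_sum_def by simp
  also have "\<dots> = (\<Sum>n\<le>m. ?f n) + infsum ?f {m<..}"
    by (subst infsum_Un_disjoint) (auto intro: summable_on_subset_banach[OF f])
  finally show ?thesis
    by (simp add: head)
qed

lemma dirichlet_coeff_eq_zero:
  assumes summable: "\<And>s. s \<ge> s1 \<Longrightarrow> dirichlet_summable c s" and one: "c 1 = 1"
    and below: "\<And>n. 2 \<le> n \<Longrightarrow> n < m \<Longrightarrow> c n = 0" and m: "2 \<le> m"
    and decay: "((\<lambda>s. real m powr s * norm (dirichlet_sum c s - 1)) \<longlongrightarrow> 0) at_top"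
  shows "c m = 0"
proof -
  define W where "W = (\<Sum>\<^sub>\<infinity>n. norm (c n) / real n powr s1)"
  have bound: "norm (c m) \<le> real m powr s * norm (dirichlet_sum c s - 1)
                 + W * real (Suc m) powr s1 * (real m / real (Suc m)) powr s"
    if s: "s \<ge> s1" for s
  proof -
    define tail where "tail = (\<Sum>\<^sub>\<infinity>n\<in>{m<..}. c n / of_real (real n powr s))"
    have "norm (c m) = real m powr s * norm (c m / of_real (real m powr s))"
      using m by (simp add: norm_divide)
    also have "\<dots> = real m powr s * norm (dirichlet_sum c s - 1 - tail)"
      using dirichlet_sum_eq_leading_term[OF summable[OF s] one below m] by (simp add: tail_def)
    also have "\<dots> \<le> real m powr s * (norm (dirichlet_sum c s - 1) + norm tail)"
      by (intro mult_left_mono norm_triangle_ineq4) simp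
    also have "\<dots> \<le> real m powr s * (norm (dirichlet_sum c s - 1) + real (Suc m) powr (s1 - s) * W)"
      unfolding tail_def W_def using s by (intro mult_left_mono add_left_mono norm_dirichlet_tail_le summable) auto
    also have "\<dots> = real m powr s * norm (dirichlet_sum c s - 1) + W * real (Suc m) powr s1 * (real m / real (Suc m)) powr s"
      using m by (simp add: powr_diff powr_divide algebra_simps)
    finally show ?thesis .
  qed
  have "((\<lambda>s. real m powr s * norm (dirichlet_sum c s - 1)
                 + W * real (Suc m) powr s1 * (real m / real (Suc m)) powr s) \<longlongrightarrow> 0 + W * real (Suc m) powr s1 * 0) at_top"
    by (intro tendsto_add decay tendsto_mult tendsto_const powr_tendsto_zero_at_top) (use m in auto)
  moreover have "\<forall>\<^sub>F s in at_top. norm (c m) \<le> real m powr s * norm (dirichlet_sum c s - 1)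
                 + W * real (Suc m) powr s1 * (real m / real (Suc m)) powr s"
    using eventually_ge_at_top[of s1] by eventually_elim (rule bound)
  ultimately have "norm (c m) \<le> 0"
    by (intro tendsto_lowerbound[of _ _ at_top]) auto
  then show ?thesis by simp
qed

lemma dirichlet_coeffs_eq_zero:
  assumes "\<And>s. s \<ge> s1 \<Longrightarrow> dirichlet_summable c s" "c 1 = 1"
    and decay: "\<And>m. 2 \<le> m \<Longrightarrow> m \<le> N \<Longrightarrow> ((\<lambda>s. real m powr s * norm (dirichlet_sum c s - 1)) \<longlongrightarrow> 0) at_top"
  shows "2 \<le> n \<Longrightarrow> n \<le> N \<Longrightarrow> c n = 0"
proof (induction n rule: less_induct)
  case (less n)
  have "c k = 0" if "2 \<le> k" "k < n" for k
    using less.IH[of k] less.prems(2) that by simp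
  then show ?case
    using dirichlet_coeff_eq_zero[OF assms(1,2) _ less.prems(1) decay[OF less.prems]] by blast
qed

definition dirichlet_factor_mult :: "nat \<Rightarrow> complex \<Rightarrow> (nat \<Rightarrow> complex) \<Rightarrow> nat \<Rightarrow> complex" where
  "dirichlet_factor_mult m b c n = c n - b * (if m dvd n then c (n div m) else 0)"

lemma dirichlet_sum_factor_mult:
  assumes m: "m > 0" and c: "dirichlet_summable c s"
  shows "dirichlet_summable (dirichlet_factor_mult m b c) s \<and>
         dirichlet_sum (dirichlet_factor_mult m b c) s = dirichlet_sum c s * (1 - b / of_real (real m powr s))"
proof -
  define f where "f n = c n / of_real (real n powr s)" for n
  define g where "g n = (if m dvd n then c (n div m) else 0) / of_real (real n powr s)" for n
  have f: "(f has_sum dirichlet_sum c s) UNIV"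
    using c unfolding dirichlet_summable_def dirichlet_sum_def f_def by (rule has_sum_infsum)
  have "g \<circ> (\<lambda>k. m * k) = (\<lambda>k. f k / of_real (real m powr s))"
    using m by (auto simp: f_def g_def powr_mult)
  moreover have "((\<lambda>k. f k / of_real (real m powr s)) has_sum (dirichlet_sum c s / of_real (real m powr s))) UNIV"
    using has_sum_cmult_right[OF f, of "inverse (of_real (real m powr s))"] by (simp add: field_simps)
  moreover have "inj (\<lambda>k. m * k)" using m by (auto simp: inj_on_def)
  ultimately have "(g has_sum (dirichlet_sum c s / of_real (real m powr s))) (range (\<lambda>k. m * k))"
    by (simp add: has_sum_reindex)
  then have g: "(g has_sum (dirichlet_sum c s / of_real (real m powr s))) UNIV"
    by (rule has_sum_cong_neutral[THEN iffD1, rotated -1]) (auto simp: g_def)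
  have "((\<lambda>n. f n - b * g n) has_sum (dirichlet_sum c s - b * (dirichlet_sum c s / of_real (real m powr s)))) UNIV"
    using has_sum_add[OF f has_sum_cmult_right[OF g, of "- b"]] by simp
  moreover have "(\<lambda>n. f n - b * g n) = (\<lambda>n. dirichlet_factor_mult m b c n / of_real (real n powr s))"
    by (auto simp: f_def g_def dirichlet_factor_mult_def diff_divide_distrib)
  ultimately show ?thesis
    unfolding dirichlet_summable_def dirichlet_sum_def
    by (auto simp: summable_on_def infsumI algebra_simps)
qed

fun dirichlet_factors_mult :: "(nat \<times> complex) list \<Rightarrow> (nat \<Rightarrow> complex) \<Rightarrow> nat \<Rightarrow> complex" where
  "dirichlet_factors_mult [] c = c"
| "dirichlet_factors_mult ((m, b) # L) c = dirichlet_factor_mult m b (dirichlet_factors_mult L c)"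

lemma dirichlet_sum_factors_mult:
  assumes "\<forall>(m, b) \<in> set L. m > 0" and "dirichlet_summable c s"
  shows "dirichlet_summable (dirichlet_factors_mult L c) s \<and>
         dirichlet_sum (dirichlet_factors_mult L c) s
           = dirichlet_sum c s * (\<Prod>(m, b)\<leftarrow>L. 1 - b / of_real (real m powr s))"
  using assms
proof (induction L)
  case (Cons x L)
  then obtain m b where "x = (m, b)" "m > 0" by (cases x) auto
  with Cons dirichlet_sum_factor_mult[of m "dirichlet_factors_mult L c" s b] show ?case
    by (simp add: algebra_simps)
qed simp

lemma dirichlet_factors_mult_one:
  assumes "\<forall>(m, b) \<in> set L. m > 1"
  shows "dirichlet_factors_mult L c 1 = c 1"
  using assms by (induction L) (auto simp: dirichlet_factor_mult_def)

lemma fps_mult_one_minus_X: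
  fixes u :: "nat \<Rightarrow> 'a::comm_ring_1"
  shows "Abs_fps u * (1 - fps_const b * fps_X) = Abs_fps (\<lambda>i. u i - b * (if i = 0 then 0 else u (i - 1)))"
proof (rule fps_ext)
  fix i
  have "fps_nth (Abs_fps u * (1 - fps_const b * fps_X)) i = u i - b * fps_nth (fps_X * Abs_fps u) i"
    by (simp add: algebra_simps)
  then show "fps_nth (Abs_fps u * (1 - fps_const b * fps_X)) i
               = fps_nth (Abs_fps (\<lambda>i. u i - b * (if i = 0 then 0 else u (i - 1)))) i"
    by (simp add: fps_X_mult_nth)
qed

lemma dirichlet_factor_mult_prime_power:
  assumes "prime p" "prime m"
  shows "dirichlet_factor_mult m b c (p ^ i)
           = (if m = p then c (p ^ i) - b * (if i = 0 then 0 else c (p ^ (i - 1))) else c (p ^ i))"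
proof (cases "m = p")
  case True
  then show ?thesis using assms by (cases i) (auto simp: dirichlet_factor_mult_def prime_gt_1_nat)
next
  case False
  then have "\<not> m dvd p ^ i"
    using assms prime_dvd_power primes_dvd_imp_eq by blast
  then show ?thesis using False by (simp add: dirichlet_factor_mult_def)
qed

lemma fps_dirichlet_factors_mult_prime_power:
  assumes p: "prime p" and L: "\<forall>(m, b) \<in> set L. prime m"
  shows "Abs_fps (\<lambda>i. dirichlet_factors_mult L c (p ^ i))
           = Abs_fps (\<lambda>i. c (p ^ i)) * (\<Prod>(m, b)\<leftarrow>L. if m = p then 1 - fps_const b * fps_X else 1)"
  using L
proof (induction L)
  case (Cons x L)
  then obtain m b where x: "x = (m, b)" and m: "prime m" by (cases x) auto
  show ?case
  proof (cases "m = p")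
    case True
    have "Abs_fps (\<lambda>i. dirichlet_factors_mult (x # L) c (p ^ i))
            = Abs_fps (\<lambda>i. dirichlet_factors_mult L c (p ^ i)) * (1 - fps_const b * fps_X)"
      using dirichlet_factor_mult_prime_power[OF p m] True x by (simp add: fps_mult_one_minus_X)
    then show ?thesis using Cons True x by (simp add: algebra_simps)
  next
    case False
    then show ?thesis using Cons dirichlet_factor_mult_prime_power[OF p m] x by simp
  qed
qed simp

lemma prod_list_concat: "prod_list (concat xss) = prod_list (map prod_list xss)"
  by (induction xss) auto

definition euler_roots :: "(nat \<Rightarrow> nat \<Rightarrow> complex) \<Rightarrow> nat \<Rightarrow> nat \<Rightarrow> (nat \<times> complex) list" where
  "euler_roots \<alpha> d N = concat (map (\<lambda>q. map (\<lambda>j. (q, \<alpha> q j)) [0..<d]) (filter prime [0..<Suc N]))"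

lemma prime_euler_roots: "(m, b) \<in> set (euler_roots \<alpha> d N) \<Longrightarrow> prime m"
  by (auto simp: euler_roots_def simp del: upt_Suc)

lemma prod_list_euler_roots:
  fixes F :: "nat \<Rightarrow> complex \<Rightarrow> 'b::comm_monoid_mult"
  shows "(\<Prod>(m, b)\<leftarrow>euler_roots \<alpha> d N. F m b) = (\<Prod>q | prime q \<and> q \<le> N. \<Prod>j<d. F q (\<alpha> q j))"
proof -
  have "(\<Prod>(m, b)\<leftarrow>euler_roots \<alpha> d N. F m b)
          = (\<Prod>q\<leftarrow>filter prime [0..<Suc N]. \<Prod>j\<leftarrow>[0..<d]. F q (\<alpha> q j))"
    by (simp add: euler_roots_def prod_list_concat map_concat comp_def del: upt_Suc)
  also have "\<dots> = (\<Prod>q \<in> set (filter prime [0..<Suc N]). \<Prod>j<d. F q (\<alpha> q j))"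
    by (simp add: prod.distinct_set_conv_list[symmetric] atLeast0LessThan del: upt_Suc)
  also have "set (filter prime [0..<Suc N]) = {q. prime q \<and> q \<le> N}"
    by (auto simp del: upt_Suc)
  finally show ?thesis .
qed

lemma exp_minus_one_le_double:
  fixes t :: real
  assumes "0 \<le> t" "t \<le> 1"
  shows "exp t - 1 \<le> 2 * t"
proof -
  have "t\<^sup>2 \<le> t"
    using assms by (simp add: power2_eq_square mult_left_le_one_le)
  then show ?thesis
    using exp_bound[OF assms] by linarith
qed

lemma norm_has_prod_minus_one_le:
  fixes f :: "nat \<Rightarrow> complex"
  assumes P: "f has_prod P" and e: "\<And>n. norm (f n - 1) \<le> e n" and "summable e"
  shows "norm (P - 1) \<le> exp (suminf e) - 1"
proof (rule tendsto_upperbound)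
  show "(\<lambda>n. norm ((\<Prod>k\<le>n. f k) - 1)) \<longlonglongrightarrow> norm (P - 1)"
    by (intro tendsto_norm tendsto_diff has_prod_imp_tendsto[OF P] tendsto_const)
  have e_nonneg: "e n \<ge> 0" for n
    using e[of n] norm_ge_zero order_trans by blast
  have "norm ((\<Prod>k\<le>n. f k) - 1) \<le> exp (suminf e) - 1" for n
  proof -
    have "norm ((\<Prod>k\<le>n. 1 + (f k - 1)) - 1) \<le> (\<Prod>k\<le>n. 1 + norm (f k - 1)) - 1"
      by (rule norm_prod_minus1_le_prod_minus1)
    also have "(\<Prod>k\<le>n. 1 + norm (f k - 1)) \<le> exp (\<Sum>k\<le>n. norm (f k - 1))"
      by (rule prod_le_exp_sum) simp
    also have "(\<Sum>k\<le>n. norm (f k - 1)) \<le> (\<Sum>k\<le>n. e k)"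
      by (intro sum_mono e)
    also have "(\<Sum>k\<le>n. e k) \<le> suminf e"
      using e_nonneg by (intro sum_le_suminf) (auto simp: assms)
    finally show ?thesis by simp
  qed
  then show "\<forall>\<^sub>F n in sequentially. norm ((\<Prod>k\<le>n. f k) - 1) \<le> exp (suminf e) - 1"
    by simp
qed simp

lemma norm_prod_inverse_one_minus_minus_one_le:
  fixes z :: "nat \<Rightarrow> complex"
  assumes z: "\<And>j. j < d \<Longrightarrow> norm (z j) \<le> x" and x: "2 * (real d + 1) * x \<le> 1"
  shows "norm ((\<Prod>j<d. inverse (1 - z j)) - 1) \<le> 4 * real d * x"
proof (cases "d = 0")
  case False
  then have x0: "x \<ge> 0" using z[of 0] norm_ge_zero order_trans by blast
  have "2 * x \<le> 2 * (real d + 1) * x"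
    using x0 by (intro mult_right_mono) auto
  then have x_half: "x \<le> 1/2" using x by linarith
  define w where "w j = inverse (1 - z j) - 1" for j
  have w: "norm (w j) \<le> 2 * x" if j: "j < d" for j
  proof -
    have small: "norm (z j) \<le> 1/2" using z[OF j] x_half by simp
    then have "norm (1 - z j) \<ge> 1/2" using norm_triangle_ineq2[of 1 "z j"] by simp
    moreover have "w j = z j / (1 - z j)"
    proof -
      have "1 - z j \<noteq> 0" using small by auto
      then show ?thesis by (simp add: w_def field_simps)
    qed
    ultimately have "norm (w j) \<le> norm (z j) / (1/2)"
      by (simp only: norm_divide) (rule divide_left_mono, auto)
    then show ?thesis using z[OF j] by simp
  qed
  have "norm ((\<Prod>j<d. 1 + w j) - 1) \<le> (\<Prod>j<d. 1 + norm (w j)) - 1"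
    by (rule norm_prod_minus1_le_prod_minus1)
  also have "(\<Prod>j<d. 1 + norm (w j)) \<le> exp (\<Sum>j<d. norm (w j))"
    by (rule prod_le_exp_sum) simp
  also have "(\<Sum>j<d. norm (w j)) \<le> 2 * real d * x"
    using sum_mono[of "{..<d}" "\<lambda>j. norm (w j)" "\<lambda>_. 2 * x"] w by simp
  also have "exp (2 * real d * x) - 1 \<le> 2 * (2 * real d * x)"
    using x x0 by (intro exp_minus_one_le_double) (auto simp: algebra_simps)
  finally show ?thesis by (simp add: w_def)
qed simp

lemma fps_prod_one_minus_X_eq_fps_of_poly:
  fixes b :: "nat \<Rightarrow> complex"
  shows "(\<Prod>j<d. 1 - fps_const (b j) * fps_X) = fps_of_poly (\<Prod>j<d. [:1, - b j:])"
  by (simp add: fps_of_poly_prod fps_of_poly_linear' flip: fps_const_neg)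

lemma fps_nth_prod_one_minus_X_0:
  fixes b :: "nat \<Rightarrow> complex"
  shows "fps_nth (\<Prod>j<d. 1 - fps_const (b j) * fps_X) 0 = 1"
  by (induction d) auto

lemma fps_nth_prod_one_minus_X_1:
  fixes b :: "nat \<Rightarrow> complex"
  shows "fps_nth (\<Prod>j<d. 1 - fps_const (b j) * fps_X) 1 = - (\<Sum>j<d. b j)"
  by (induction d) (simp_all add: fps_mult_nth_1 fps_nth_prod_one_minus_X_0)

lemma eval_fps_ne_zero_if_mult_eq_one:
  fixes A P :: "complex fps"
  assumes "A * P = 1" "ereal (norm z) < fps_conv_radius A" "ereal (norm z) < fps_conv_radius P"
  shows "eval_fps P z \<noteq> 0"
proof
  assume "eval_fps P z = 0"
  then have "eval_fps (A * P) z = 0"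
    using assms(2,3) by (simp add: eval_fps_mult)
  then show False using assms(1) by simp
qed

text \<open>Ramanujan gives \<open>|a(p^k)| \<le> C r^(-k/2)\<close> by taking \<open>\<epsilon>\<close> with \<open>p^\<epsilon> = r^(-1/2)\<close>;
  the series \<open>\<Sum> a(p^k) r^k\<close> is then dominated by a geometric series of ratio \<open>sqrt r\<close>.\<close>

lemma ramanujan_prime_power_conv_radius:
  assumes R: "ramanujan a" and p: "prime p"
  shows "1 \<le> fps_conv_radius (Abs_fps (\<lambda>k. a (p ^ k)))"
  unfolding fps_conv_radius_def
proof (rule conv_radius_geI_ex')
  fix r :: real assume r: "0 < r" "ereal r < 1"
  have lp: "ln (real p) > 0" using prime_gt_1_nat[OF p] by simp
  define \<epsilon> where "\<epsilon> = - ln r / (2 * ln (real p))"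
  have "\<epsilon> > 0" using r lp by (simp add: \<epsilon>_def divide_neg_pos)
  with R obtain C where C: "\<And>n. n \<ge> 1 \<Longrightarrow> norm (a n) \<le> C * real n powr \<epsilon>"
    unfolding ramanujan_def by blast
  have "real p powr \<epsilon> * r = exp (- ln r / 2) * exp (ln r)"
    using lp r prime_gt_0_nat[OF p] by (simp add: powr_def \<epsilon>_def)
  also have "\<dots> = exp (ln r / 2)"
    by (simp flip: exp_add)
  also have "\<dots> = sqrt r"
    using r by (simp add: powr_half_sqrt[symmetric] powr_def)
  finally have pe: "real p powr \<epsilon> * r = sqrt r" .
  have bound: "norm (fps_nth (Abs_fps (\<lambda>k. a (p ^ k))) k * of_real r ^ k) \<le> C * sqrt r ^ k" for k
  proof -
    have "norm (a (p ^ k)) \<le> C * real (p ^ k) powr \<epsilon>"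
      using prime_gt_0_nat[OF p] by (intro C) simp
    also have "real (p ^ k) powr \<epsilon> = (real p powr \<epsilon>) ^ k"
      using prime_gt_0_nat[OF p] by (simp add: powr_realpow[symmetric] powr_powr powr_power mult.commute)
    finally have "norm (a (p ^ k)) * r ^ k \<le> C * (real p powr \<epsilon>) ^ k * r ^ k"
      using r by (intro mult_right_mono) auto
    then show ?thesis
      using r by (simp add: norm_mult norm_power pe[symmetric] power_mult_distrib mult.assoc)
  qed
  have "summable (\<lambda>k. C * sqrt r ^ k)"
    using r by (intro summable_mult summable_geometric) auto
  then show "summable (\<lambda>k. fps_nth (Abs_fps (\<lambda>k. a (p ^ k))) k * of_real r ^ k)"
    by (rule summable_comparison_test') (rule bound)
qed

locale euler_product =
  fixes a :: "nat \<Rightarrow> complex" and d :: nat and \<alpha> :: "nat \<Rightarrow> nat \<Rightarrow> complex" and K \<theta> :: real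
  assumes coeff_one: "a 1 = 1"
    and summable: "\<And>s. s > 1 \<Longrightarrow> dirichlet_summable a s"
    and root_bound: "\<And>p j. prime p \<Longrightarrow> j < d \<Longrightarrow> norm (\<alpha> p j) \<le> K * real p powr \<theta>"
    and K_pos: "K > 0"
    and has_prod: "\<And>s. s > 1 \<Longrightarrow>
          (\<lambda>n. if prime n then \<Prod>j<d. inverse (1 - \<alpha> n j / of_real (real n powr s)) else 1)
            has_prod dirichlet_sum a s"
begin

definition local_factor :: "real \<Rightarrow> nat \<Rightarrow> complex" where
  "local_factor s n = (if prime n then \<Prod>j<d. inverse (1 - \<alpha> n j / of_real (real n powr s)) else 1)"

definition admissible :: "real \<Rightarrow> bool" where
  "admissible s \<longleftrightarrow> 2 \<le> s \<and> \<theta> + 2 \<le> s \<and> 2 * (real d + 1) * K * 2 powr (\<theta> - s) \<le> 1"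

lemma eventually_admissible: "eventually admissible at_top"
  unfolding admissible_def by (intro eventually_conj; real_asymp)

lemma norm_root_term_le:
  assumes "prime n" "j < d"
  shows "norm (\<alpha> n j / of_real (real n powr s)) \<le> K * real n powr (\<theta> - s)"
  using root_bound[OF assms] prime_gt_0_nat[OF assms(1)]
  by (simp add: norm_divide powr_diff divide_right_mono)

lemma root_term_small:
  assumes s: "admissible s" and n: "n \<ge> 2"
  shows "2 * (real d + 1) * (K * real n powr (\<theta> - s)) \<le> 1"
proof -
  have "K * real n powr (\<theta> - s) \<le> K * 2 powr (\<theta> - s)"
    using s n K_pos by (intro mult_left_mono powr_mono2') (auto simp: admissible_def)
  then have "2 * (real d + 1) * (K * real n powr (\<theta> - s)) \<le> 2 * (real d + 1) * (K * 2 powr (\<theta> - s))"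
    by (rule mult_left_mono) simp
  also have "\<dots> \<le> 1"
    using s by (simp add: admissible_def mult.assoc)
  finally show ?thesis .
qed

lemma norm_local_factor_minus_one_le:
  assumes s: "admissible s"
  shows "norm (local_factor s n - 1) \<le> 4 * real d * K * real n powr (\<theta> - s)"
proof (cases "prime n")
  case True
  then show ?thesis
    using norm_prod_inverse_one_minus_minus_one_le[OF norm_root_term_le root_term_small[OF s]]
    by (simp add: local_factor_def mult.assoc prime_ge_2_nat)
qed (use K_pos in \<open>simp add: local_factor_def\<close>)

lemma local_factor_nonzero:
  assumes s: "admissible s"
  shows "local_factor s n \<noteq> 0"
proof -
  have "\<alpha> n j / of_real (real n powr s) \<noteq> 1" if n: "prime n" "j < d" for j
  proof -
    have "2 * (K * real n powr (\<theta> - s)) \<le> 2 * (real d + 1) * (K * real n powr (\<theta> - s))"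
      using K_pos by (intro mult_right_mono) auto
    also have "\<dots> \<le> 1"
      using root_term_small[OF s prime_ge_2_nat[OF n(1)]] .
    finally have "2 * (K * real n powr (\<theta> - s)) \<le> 1" .
    then have "norm (\<alpha> n j / of_real (real n powr s)) < 1"
      using norm_root_term_le[OF n, of s] by linarith
    then show ?thesis by auto
  qed
  then show ?thesis by (auto simp: local_factor_def)
qed

definition truncation :: "nat \<Rightarrow> nat \<Rightarrow> complex" where
  "truncation N = dirichlet_factors_mult (euler_roots \<alpha> d N) a"

lemma dirichlet_sum_truncation:
  assumes "s > 1"
  shows "dirichlet_summable (truncation N) s \<and>
         dirichlet_sum (truncation N) s
           = dirichlet_sum a s * (\<Prod>q | prime q \<and> q \<le> N. \<Prod>j<d. 1 - \<alpha> q j / of_real (real q powr s))"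
proof -
  have "\<forall>(m, b) \<in> set (euler_roots \<alpha> d N). m > 0"
    using prime_euler_roots prime_gt_0_nat by blast
  then show ?thesis
    using dirichlet_sum_factors_mult[OF _ summable[OF assms]]
      prod_list_euler_roots[of "\<lambda>m b. 1 - b / of_real (real m powr s)"]
    by (simp add: truncation_def)
qed

lemma truncation_one: "truncation N 1 = 1"
proof -
  have "\<forall>(m, b) \<in> set (euler_roots \<alpha> d N). m > 1"
    using prime_euler_roots prime_gt_1_nat by blast
  then show ?thesis
    using dirichlet_factors_mult_one coeff_one by (simp add: truncation_def)
qed

lemma has_prod_truncation:
  assumes s: "admissible s"
  shows "(\<lambda>n. if n \<le> N then 1 else local_factor s n) has_prod dirichlet_sum (truncation N) s"
proof -
  have s1: "s > 1" using s by (simp add: admissible_def)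
  have "local_factor s has_prod dirichlet_sum a s"
    using has_prod[OF s1] unfolding local_factor_def[abs_def] .
  then have "(\<lambda>n. local_factor s n / (if n \<in> {..N} then local_factor s n else 1))
               has_prod (dirichlet_sum a s / (\<Prod>n\<le>N. local_factor s n))"
    using has_prod_If_finite_set[of "{..N}"] by (intro has_prod_divide) auto
  moreover have "(\<lambda>n. local_factor s n / (if n \<in> {..N} then local_factor s n else 1))
                   = (\<lambda>n. if n \<le> N then 1 else local_factor s n)"
    using local_factor_nonzero[OF s] by auto
  moreover have "(\<Prod>n\<le>N. local_factor s n)
                   = inverse (\<Prod>q | prime q \<and> q \<le> N. \<Prod>j<d. 1 - \<alpha> q j / of_real (real q powr s))"
  proof -
    have "(\<Prod>n\<le>N. local_factor s n)
            = (\<Prod>q | prime q \<and> q \<le> N. \<Prod>j<d. inverse (1 - \<alpha> q j / of_real (real q powr s)))"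
      unfolding local_factor_def by (subst prod.If_cases) (auto intro!: prod.cong)
    then show ?thesis by (simp add: prod_inversef[symmetric])
  qed
  ultimately show ?thesis
    using dirichlet_sum_truncation[OF s1] by (simp add: divide_inverse)
qed

lemma norm_dirichlet_sum_truncation_minus_one_le:
  assumes s: "admissible s"
  shows "norm (dirichlet_sum (truncation N) s - 1)
           \<le> exp (4 * real d * K * real (Suc N) powr (\<theta> + 2 - s) * (\<Sum>n. real n powr - 2)) - 1"
proof -
  define c where "c = 4 * real d * K * real (Suc N) powr (\<theta> + 2 - s)"
  define e where "e n = (if N < n then 4 * real d * K * real n powr (\<theta> - s) else 0)" for n
  have Z: "summable (\<lambda>n. real n powr - 2)"
    by (simp add: summable_real_powr_iff)
  have e_nonneg: "e n \<ge> 0" for n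
    using K_pos by (simp add: e_def)
  have e_le: "e n \<le> c * real n powr - 2" for n
  proof (cases "N < n")
    case True
    have "real n powr (\<theta> + 2 - s) \<le> real (Suc N) powr (\<theta> + 2 - s)"
      using True s by (intro powr_mono2') (auto simp: admissible_def)
    then have "real n powr (\<theta> + 2 - s) * real n powr - 2 \<le> real (Suc N) powr (\<theta> + 2 - s) * real n powr - 2"
      by (rule mult_right_mono) simp
    then have "4 * real d * K * (real n powr (\<theta> + 2 - s) * real n powr - 2) \<le> c * real n powr - 2"
      using K_pos by (simp add: c_def mult_left_mono mult.assoc)
    then show ?thesis
      using True by (simp add: e_def powr_add[symmetric])
  qed (use K_pos in \<open>simp add: e_def c_def\<close>)
  have e: "summable e"
    by (rule summable_comparison_test'[OF summable_mult[OF Z, of c]]) (use e_le e_nonneg in simp)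
  have "norm (dirichlet_sum (truncation N) s - 1) \<le> exp (suminf e) - 1"
    by (rule norm_has_prod_minus_one_le[OF has_prod_truncation[OF s] _ e])
       (use e_nonneg norm_local_factor_minus_one_le[OF s] in \<open>auto simp: e_def\<close>)
  also have "suminf e \<le> c * (\<Sum>n. real n powr - 2)"
    using suminf_le[OF e_le e summable_mult[OF Z]] by (simp add: suminf_mult[OF Z])
  finally show ?thesis by (simp add: c_def)
qed

lemma truncation_decay:
  assumes m: "2 \<le> m" "m \<le> N"
  shows "((\<lambda>s. real m powr s * norm (dirichlet_sum (truncation N) s - 1)) \<longlongrightarrow> 0) at_top"
proof -
  define q where "q = 1 / real (Suc N)"
  define c where "c = 4 * real d * K * real (Suc N) powr (\<theta> + 2) * (\<Sum>n. real n powr - 2)"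
  define Y where "Y s = 4 * real d * K * real (Suc N) powr (\<theta> + 2 - s) * (\<Sum>n. real n powr - 2)" for s
  have q: "0 < q" "q < 1" "0 < real m * q" "real m * q < 1"
    using m by (auto simp: q_def field_simps)
  have c: "c \<ge> 0"
    using K_pos by (simp add: c_def summable_real_powr_iff suminf_nonneg)
  have Y: "Y s = c * q powr s" for s
  proof -
    have "real (Suc N) powr (\<theta> + 2 - s) = real (Suc N) powr (\<theta> + 2) * q powr s"
      by (simp add: q_def powr_diff powr_divide)
    then show ?thesis by (simp add: Y_def c_def ac_simps)
  qed
  have "(Y \<longlongrightarrow> c * 0) at_top"
    unfolding Y by (intro tendsto_mult tendsto_const powr_tendsto_zero_at_top q)
  then have "\<forall>\<^sub>F s in at_top. Y s < 1"
    by (intro order_tendstoD(2)) auto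
  with eventually_admissible
  have upper: "\<forall>\<^sub>F s in at_top. real m powr s * norm (dirichlet_sum (truncation N) s - 1)
                 \<le> 2 * c * (real m * q) powr s"
  proof eventually_elim
    case (elim s)
    have "norm (dirichlet_sum (truncation N) s - 1) \<le> exp (Y s) - 1"
      unfolding Y_def by (rule norm_dirichlet_sum_truncation_minus_one_le[OF elim(1)])
    also have "\<dots> \<le> 2 * Y s"
      using elim(2) c q by (intro exp_minus_one_le_double) (auto simp: Y)
    finally have "real m powr s * norm (dirichlet_sum (truncation N) s - 1) \<le> real m powr s * (2 * Y s)"
      by (rule mult_left_mono) simp
    also have "\<dots> = 2 * c * (real m * q) powr s"
      using q by (simp add: Y powr_mult)
    finally show ?case .
  qed
  have "((\<lambda>s. 2 * c * (real m * q) powr s) \<longlongrightarrow> 2 * c * 0) at_top"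
    by (intro tendsto_mult tendsto_const powr_tendsto_zero_at_top q)
  then show ?thesis
    by (intro tendsto_sandwich[OF _ upper tendsto_const]) auto
qed

lemma truncation_eq_zero:
  assumes "2 \<le> n" "n \<le> N"
  shows "truncation N n = 0"
proof (rule dirichlet_coeffs_eq_zero[OF _ truncation_one truncation_decay assms])
  show "dirichlet_summable (truncation N) s" if "2 \<le> s" for s
    using dirichlet_sum_truncation[of s N] that by simp
qed

lemma fps_truncation_prime_power:
  assumes p: "prime p" "p \<le> N"
  shows "Abs_fps (\<lambda>k. truncation N (p ^ k)) = Abs_fps (\<lambda>k. a (p ^ k)) * (\<Prod>j<d. 1 - fps_const (\<alpha> p j) * fps_X)"
proof -
  have "(\<Prod>(m, b)\<leftarrow>euler_roots \<alpha> d N. if m = p then 1 - fps_const b * fps_X else 1)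
          = (\<Prod>q | prime q \<and> q \<le> N. \<Prod>j<d. if q = p then 1 - fps_const (\<alpha> q j) * fps_X else 1)"
    by (rule prod_list_euler_roots)
  also have "\<dots> = (\<Prod>q | prime q \<and> q \<le> N. if q = p then \<Prod>j<d. 1 - fps_const (\<alpha> p j) * fps_X else 1)"
    by (intro prod.cong) auto
  also have "\<dots> = (\<Prod>j<d. 1 - fps_const (\<alpha> p j) * fps_X)"
    using p by (subst prod.delta) auto
  moreover have "\<forall>(m, b) \<in> set (euler_roots \<alpha> d N). prime m"
    using prime_euler_roots by blast
  ultimately show ?thesis
    using fps_dirichlet_factors_mult_prime_power[OF p(1), of "euler_roots \<alpha> d N" a]
    by (simp add: truncation_def)
qed

text \<open>The coefficient of \<open>X^i\<close> is that of the truncation at a level \<open>N \<ge> p^i\<close>, which is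
  \<open>a 1 = 1\<close> for \<open>i = 0\<close> and vanishes otherwise.\<close>

lemma local_factor_fps:
  assumes p: "prime p"
  shows "Abs_fps (\<lambda>k. a (p ^ k)) * (\<Prod>j<d. 1 - fps_const (\<alpha> p j) * fps_X) = 1"
proof (rule fps_ext)
  fix i
  have N: "p \<le> p ^ Suc i" "p ^ i \<le> p ^ Suc i"
    using prime_gt_0_nat[OF p] by (auto simp: power_increasing)
  have "fps_nth (Abs_fps (\<lambda>k. a (p ^ k)) * (\<Prod>j<d. 1 - fps_const (\<alpha> p j) * fps_X)) i
          = truncation (p ^ Suc i) (p ^ i)"
    by (simp flip: fps_truncation_prime_power[OF p N(1)])
  also have "\<dots> = fps_nth 1 i"
  proof (cases "i = 0")
    case False
    then have "p \<le> p ^ i"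
      using prime_gt_0_nat[OF p] by (simp add: self_le_power)
    then have "2 \<le> p ^ i"
      using prime_ge_2_nat[OF p] by linarith
    then show ?thesis using False truncation_eq_zero N(2) by simp
  next
    case True
    then show ?thesis using truncation_one by simp
  qed
  finally show "fps_nth (Abs_fps (\<lambda>k. a (p ^ k)) * (\<Prod>j<d. 1 - fps_const (\<alpha> p j) * fps_X)) i = fps_nth 1 i" .
qed

lemma coeff_prime_eq_sum_roots:
  assumes "prime p"
  shows "a p = (\<Sum>j<d. \<alpha> p j)"
proof -
  have "fps_nth (Abs_fps (\<lambda>k. a (p ^ k)) * (\<Prod>j<d. 1 - fps_const (\<alpha> p j) * fps_X)) 1 = 0"
    by (simp add: local_factor_fps[OF assms])
  then have "a (p ^ 0) * - (\<Sum>j<d. \<alpha> p j) + a (p ^ 1) * 1 = 0"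
    by (simp only: fps_mult_nth_1 fps_nth_Abs_fps fps_nth_prod_one_minus_X_0 fps_nth_prod_one_minus_X_1)
  then show ?thesis
    using coeff_one by simp
qed

lemma norm_root_le_one:
  assumes R: "ramanujan a" and p: "prime p" and j: "j < d"
  shows "norm (\<alpha> p j) \<le> 1"
proof (rule ccontr)
  assume "\<not> norm (\<alpha> p j) \<le> 1"
  then have big: "norm (\<alpha> p j) > 1" by simp
  define P where "P = (\<Prod>j<d. 1 - fps_const (\<alpha> p j) * fps_X)"
  define z where "z = 1 / \<alpha> p j"
  have "eval_fps P z = (\<Prod>i<d. 1 - z * \<alpha> p i)"
    by (simp add: P_def fps_prod_one_minus_X_eq_fps_of_poly poly_prod)
  also have "\<dots> = 0"
    using j big by (intro prod_zero) (auto simp: z_def intro!: bexI[of _ j])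
  finally have "eval_fps P z = 0" .
  moreover have "eval_fps P z \<noteq> 0"
  proof (rule eval_fps_ne_zero_if_mult_eq_one[OF local_factor_fps[OF p, folded P_def]])
    have "norm z < 1" using big by (simp add: z_def norm_divide divide_less_eq)
    then have "ereal (norm z) < 1" by simp
    then show "ereal (norm z) < fps_conv_radius (Abs_fps (\<lambda>k. a (p ^ k)))"
      using ramanujan_prime_power_conv_radius[OF R p] by (rule less_le_trans)
    show "ereal (norm z) < fps_conv_radius P"
      by (simp add: P_def fps_prod_one_minus_X_eq_fps_of_poly)
  qed
  ultimately show False by contradiction
qed

lemma norm_coeff_prime_le:
  assumes "ramanujan a" "prime p"
  shows "norm (a p) \<le> real d"
proof -
  have "norm (a p) \<le> (\<Sum>j<d. norm (\<alpha> p j))"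
    unfolding coeff_prime_eq_sum_roots[OF assms(2)] by (rule norm_sum)
  also have "\<dots> \<le> (\<Sum>j<d. 1)"
    by (intro sum_mono norm_root_le_one assms) auto
  finally show ?thesis by simp
qed

end

lemma dser_eq_dirichlet_sum:
  assumes "s > 1" "summable (\<lambda>n. norm (a (Suc n) / of_nat (Suc n) powr complex_of_real s))"
  shows "dirichlet_summable a s" "dser a (of_real s) = dirichlet_sum a s"
proof -
  have pow: "of_nat n powr complex_of_real s = of_real (real n powr s)" for n
    using powr_of_real[of "real n" s] by simp
  have "summable (\<lambda>n. norm (a n / of_real (real n powr s)))"
    using assms(2) unfolding pow by (subst summable_Suc_iff[symmetric])
  then show summ: "dirichlet_summable a s"
    unfolding dirichlet_summable_def by (rule norm_summable_imp_summable_on)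
  then have "(\<lambda>n. a n / of_real (real n powr s)) sums dirichlet_sum a s"
    unfolding dirichlet_summable_def dirichlet_sum_def by (intro has_sum_imp_sums has_sum_infsum)
  then have "(\<lambda>n. a (Suc n) / of_real (real (Suc n) powr s)) sums dirichlet_sum a s"
    by (subst sums_Suc_iff) simp
  then show "dser a (of_real s) = dirichlet_sum a s"
    unfolding dser_def pow by (rule sums_unique[symmetric])
qed

lemma S_poly_euler_product:
  assumes "S_poly a"
  shows "\<exists>d \<alpha> K \<theta>. euler_product a d \<alpha> K \<theta>"
proof -
  from assms obtain d :: nat and \<alpha> :: "nat \<Rightarrow> nat \<Rightarrow> complex" and \<theta> c where
    one: "a 1 = 1" and
    summ: "\<And>s. 1 < Re s \<Longrightarrow> summable (\<lambda>n. norm (a (Suc n) / of_nat (Suc n) powr s))" and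
    bound: "\<And>p j. prime p \<and> j < d \<Longrightarrow> norm (\<alpha> p j) \<le> c * real p powr \<theta>" and
    prod: "\<And>s. 1 < Re s \<Longrightarrow> (\<lambda>n. if prime n then (\<Prod>j<d. inverse (1 - \<alpha> n j / of_nat n powr s)) else 1)
                                  has_prod dser a s"
    unfolding S_poly_def by blast
  have pow: "of_nat n powr complex_of_real s = of_real (real n powr s)" for n s
    using powr_of_real[of "real n" s] by simp
  have "euler_product a d \<alpha> (max c 1) \<theta>"
  proof
    show "a 1 = 1" by (rule one)
    show "dirichlet_summable a s" if "s > 1" for s
      using that by (intro dser_eq_dirichlet_sum(1) summ) auto
    show "norm (\<alpha> p j) \<le> max c 1 * real p powr \<theta>" if "prime p" "j < d" for p j
    proof -
      have "c * real p powr \<theta> \<le> max c 1 * real p powr \<theta>"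
        by (intro mult_right_mono) auto
      then show ?thesis using bound[of p j] that by linarith
    qed
    show "(\<lambda>n. if prime n then \<Prod>j<d. inverse (1 - \<alpha> n j / of_real (real n powr s)) else 1)
            has_prod dirichlet_sum a s" if s: "s > 1" for s
    proof -
      have Re: "1 < Re (complex_of_real s)" using s by simp
      from prod[OF Re] show ?thesis
        unfolding pow dser_eq_dirichlet_sum(2)[OF s summ[OF Re]] .
    qed
  qed simp
  then show ?thesis by blast
qed

lemma S_poly_ramanujan_prime_coeff_bounded:
  assumes "S_poly a" "ramanujan a"
  shows "\<exists>D. \<forall>p. prime p \<longrightarrow> norm (a p) \<le> D"
  using S_poly_euler_product[OF assms(1)] euler_product.norm_coeff_prime_le[OF _ assms(2)] by blast

lemma S_poly_ramanujan_uniform_coeff_bound: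
  assumes "finite I" "\<forall>h\<in>I. S_poly (a h) \<and> ramanujan (a h)"
  shows "\<exists>D. \<forall>h\<in>I. \<forall>p. prime p \<longrightarrow> norm (a h p) \<le> D"
proof -
  have "\<forall>h\<in>I. \<forall>\<^sub>F D in at_top. \<forall>p. prime p \<longrightarrow> norm (a h p) \<le> D"
  proof
    fix h assume "h \<in> I"
    then have "S_poly (a h)" "ramanujan (a h)" using assms(2) by blast+
    then obtain D0 where D0: "\<forall>p. prime p \<longrightarrow> norm (a h p) \<le> D0"
      using S_poly_ramanujan_prime_coeff_bounded by blast
    show "\<forall>\<^sub>F D in at_top. \<forall>p. prime p \<longrightarrow> norm (a h p) \<le> D"
      using eventually_ge_at_top[of D0] by eventually_elim (use D0 in \<open>meson order_trans\<close>)
  qed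
  then have "\<forall>\<^sub>F D in at_top. \<forall>h\<in>I. \<forall>p. prime p \<longrightarrow> norm (a h p) \<le> D"
    using assms(1) by (simp add: eventually_ball_finite_distrib)
  then obtain N where "\<forall>h\<in>I. \<forall>p. prime p \<longrightarrow> norm (a h p) \<le> N"
    by (auto simp: eventually_at_top_linorder)
  then show ?thesis by blast
qed

lemma sum_by_parts:
  fixes v g :: "nat \<Rightarrow> 'a::comm_ring"
  shows "(\<Sum>k\<le>N. v k * g k) = (\<Sum>i\<le>N. v i) * g N + (\<Sum>k<N. (\<Sum>i\<le>k. v i) * (g k - g (Suc k)))"
  by (induction N) (simp_all add: algebra_simps)

lemma sum_by_parts_lower:
  fixes v g :: "nat \<Rightarrow> real"
  assumes "K \<le> N"
  shows "(\<Sum>i\<le>N. v i) * g N + (\<Sum>k\<in>{K..<N}. (\<Sum>i\<le>k. v i) * (g k - g (Suc k)))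
           - (\<Sum>k<K. \<bar>(\<Sum>i\<le>k. v i) * (g k - g (Suc k))\<bar>) \<le> (\<Sum>k\<le>N. v k * g k)"
proof -
  have "{..<N} = {..<K} \<union> {K..<N}" using assms by auto
  then have split: "(\<Sum>k<N. (\<Sum>i\<le>k. v i) * (g k - g (Suc k)))
               = (\<Sum>k<K. (\<Sum>i\<le>k. v i) * (g k - g (Suc k))) + (\<Sum>k\<in>{K..<N}. (\<Sum>i\<le>k. v i) * (g k - g (Suc k)))"
    by (simp add: sum.union_disjoint ivl_disj_int)
  have "(\<Sum>k<K. - \<bar>(\<Sum>i\<le>k. v i) * (g k - g (Suc k))\<bar>) \<le> (\<Sum>k<K. (\<Sum>i\<le>k. v i) * (g k - g (Suc k)))"
    by (rule sum_mono) simp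
  then have "- (\<Sum>k<K. \<bar>(\<Sum>i\<le>k. v i) * (g k - g (Suc k))\<bar>) \<le> (\<Sum>k<K. (\<Sum>i\<le>k. v i) * (g k - g (Suc k)))"
    by (simp only: sum_negf)
  then show ?thesis
    unfolding sum_by_parts[of v g N] split by linarith
qed

lemma partial_sum_nonneg:
  fixes v :: "nat \<Rightarrow> real"
  assumes "2 \<le> k" "0 < c" "c * real k / ln (real k) \<le> (\<Sum>i\<le>k. v i)"
  shows "0 \<le> (\<Sum>i\<le>k. v i)"
proof -
  have "0 < ln (real k)" using assms(1) by simp
  then have "0 \<le> c * real k / ln (real k)" using assms(2) by simp
  then show ?thesis using assms(3) by linarith
qed

lemma weighted_sum_lower_powr:
  fixes v :: "nat \<Rightarrow> real"
  assumes \<sigma>: "0 < \<sigma>" and K: "2 \<le> K" and c: "0 < c"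
    and V: "\<And>k. K \<le> k \<Longrightarrow> c * real k / ln (real k) \<le> (\<Sum>i\<le>k. v i)"
  shows "\<exists>A. \<forall>N\<ge>K. c * real N powr (1 - \<sigma>) / ln (real N) - A \<le> (\<Sum>k\<le>N. v k / real k powr \<sigma>)"
proof -
  define g where "g k = 1 / real k powr \<sigma>" for k
  define A where "A = (\<Sum>k<K. \<bar>(\<Sum>i\<le>k. v i) * (g k - g (Suc k))\<bar>)"
  have "c * real N powr (1 - \<sigma>) / ln (real N) - A \<le> (\<Sum>k\<le>N. v k / real k powr \<sigma>)" if N: "K \<le> N" for N
  proof -
    have "0 \<le> (\<Sum>i\<le>k. v i) * (g k - g (Suc k))" if "k \<in> {K..<N}" for k
    proof (rule mult_nonneg_nonneg)
      show "0 \<le> (\<Sum>i\<le>k. v i)"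
        using that K c V[of k] by (intro partial_sum_nonneg[of k c]) auto
      show "0 \<le> g k - g (Suc k)"
        using that K \<sigma> by (simp add: g_def frac_le powr_mono2)
    qed
    then have "0 \<le> (\<Sum>k\<in>{K..<N}. (\<Sum>i\<le>k. v i) * (g k - g (Suc k)))"
      by (rule sum_nonneg)
    moreover have "c * real N powr (1 - \<sigma>) / ln (real N) \<le> (\<Sum>i\<le>N. v i) * g N"
    proof -
      have "c * real N powr (1 - \<sigma>) / ln (real N) = c * real N / ln (real N) * g N"
        using N K by (simp add: g_def powr_diff)
      also have "\<dots> \<le> (\<Sum>i\<le>N. v i) * g N"
        using V[OF N] by (rule mult_right_mono) (simp add: g_def)
      finally show ?thesis .
    qed
    ultimately show ?thesis
      using sum_by_parts_lower[OF N, of v g] by (simp add: A_def g_def)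
  qed
  then show ?thesis by blast
qed

lemma ln_ln_Suc_diff_le:
  fixes x :: real
  assumes "x \<ge> 2"
  shows "ln (ln (x + 1)) - ln (ln x) \<le> 1 / (x * ln x)"
proof -
  have "ln (ln (x + 1)) - ln (ln x) = ln (ln (x + 1) / ln x)"
    using assms by (simp add: ln_div)
  also have "\<dots> \<le> ln (x + 1) / ln x - 1"
    using assms by (intro ln_le_minus_one) simp
  also have "\<dots> = (ln (x + 1) - ln x) / ln x"
    using assms by (simp add: field_simps)
  also have "\<dots> = ln (1 + 1 / x) / ln x"
  proof -
    have "1 + 1 / x = (x + 1) / x" using assms by (simp add: field_simps)
    then show ?thesis using assms by (simp add: ln_div)
  qed
  also have "\<dots> \<le> (1 / x) / ln x"
    using assms by (intro divide_right_mono ln_add_one_self_le_self) auto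
  finally show ?thesis by simp
qed

lemma weighted_sum_lower_ln_ln:
  fixes v :: "nat \<Rightarrow> real"
  assumes K: "2 \<le> K" and c: "0 < c"
    and V: "\<And>k. K \<le> k \<Longrightarrow> c * real k / ln (real k) \<le> (\<Sum>i\<le>k. v i)"
  shows "\<exists>A. \<forall>N\<ge>K. c * ln (ln (real N + 1)) - A \<le> (\<Sum>k\<le>N. v k / real k)"
proof -
  define g where "g k = 1 / real k" for k
  define \<Lambda> where "\<Lambda> k = ln (ln (real k + 1))" for k
  define A where "A = (\<Sum>k<K. \<bar>(\<Sum>i\<le>k. v i) * (g k - g (Suc k))\<bar>) + c * \<Lambda> K"
  have "c * \<Lambda> N - A \<le> (\<Sum>k\<le>N. v k / real k)" if N: "K \<le> N" for N
  proof -
    have "c * (\<Lambda> (Suc k) - \<Lambda> k) \<le> (\<Sum>i\<le>k. v i) * (g k - g (Suc k))" if k: "k \<in> {K..<N}" for k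
    proof -
      have k2: "real k \<ge> 2" using k K by auto
      have "\<Lambda> (Suc k) - \<Lambda> k \<le> 1 / ((real k + 1) * ln (real k + 1))"
        using ln_ln_Suc_diff_le[of "real k + 1"] k2 by (simp add: \<Lambda>_def add.commute)
      also have "\<dots> \<le> 1 / ((real k + 1) * ln (real k))"
        using k2 by (intro divide_left_mono mult_left_mono mult_pos_pos) auto
      also have "\<dots> = real k / ln (real k) * (g k - g (Suc k))"
      proof -
        have "g k - g (Suc k) = 1 / (real k * (real k + 1))"
          using k2 by (simp add: g_def field_simps)
        moreover have "real k / ln (real k) * (1 / (real k * (real k + 1)))
                         = real k / (real k * ((real k + 1) * ln (real k)))"
          by (simp add: field_simps)
        ultimately show ?thesis using k2 by simp
      qed
      finally have "\<Lambda> (Suc k) - \<Lambda> k \<le> real k / ln (real k) * (g k - g (Suc k))" .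
      then have "c * (\<Lambda> (Suc k) - \<Lambda> k) \<le> c * (real k / ln (real k) * (g k - g (Suc k)))"
        using c by (intro mult_left_mono) auto
      also have "\<dots> = c * real k / ln (real k) * (g k - g (Suc k))"
        by simp
      also have "\<dots> \<le> (\<Sum>i\<le>k. v i) * (g k - g (Suc k))"
        using V[of k] k k2 by (intro mult_right_mono) (auto simp: g_def field_simps)
      finally show ?thesis .
    qed
    then have "c * (\<Lambda> N - \<Lambda> K) \<le> (\<Sum>k\<in>{K..<N}. (\<Sum>i\<le>k. v i) * (g k - g (Suc k)))"
      using sum_mono[of "{K..<N}" "\<lambda>k. c * (\<Lambda> (Suc k) - \<Lambda> k)"] sum_Suc_diff'[OF N, of \<Lambda>]
      by (simp add: sum_distrib_left[symmetric])
    moreover have "0 \<le> (\<Sum>i\<le>N. v i) * g N"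
      using partial_sum_nonneg[OF _ c V[OF N]] N K by (simp add: g_def)
    ultimately show ?thesis
      using sum_by_parts_lower[OF N, of v g] by (simp add: A_def g_def algebra_simps)
  qed
  then show ?thesis by (auto simp: \<Lambda>_def)
qed

lemma sum_primes_le_nat:
  fixes n :: nat
  shows "(\<Sum>p | prime p \<and> p \<le> n. f p) = (\<Sum>k\<le>n. if prime k then f k else 0)"
proof -
  have "{p. prime p \<and> p \<le> n} = {k \<in> {..n}. prime k}" by auto
  then show ?thesis by (simp only: sum.inter_filter[OF finite_atMost])
qed

lemma sum_primes_le_eq_sum_atMost:
  "(\<Sum>p | prime p \<and> real p \<le> y. f p) = (\<Sum>k\<le>nat \<lfloor>y\<rfloor>. if prime k then f k else 0)"
proof -
  have "{p. prime p \<and> real p \<le> y} = {k \<in> {..nat \<lfloor>y\<rfloor>}. prime k}"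
  proof (intro equalityI subsetI)
    fix p assume "p \<in> {k \<in> {..nat \<lfloor>y\<rfloor>}. prime k}"
    then have "p \<le> nat \<lfloor>y\<rfloor>" "prime p" by auto
    then have "int p \<le> \<lfloor>y\<rfloor>" using prime_gt_0_nat[of p] by (cases "0 \<le> \<lfloor>y\<rfloor>") (auto simp: le_nat_iff)
    then show "p \<in> {p. prime p \<and> real p \<le> y}"
      using \<open>prime p\<close> by (simp add: le_floor_iff)
  qed (auto simp: le_nat_floor)
  then show ?thesis by (simp only: sum.inter_filter[OF finite_atMost])
qed

lemma prime_partial_sums_lower:
  fixes v :: "nat \<Rightarrow> real"
  assumes "\<forall>\<^sub>F x in at_top. c * x / ln x \<le> (\<Sum>p | prime p \<and> real p \<le> x. v p)"
  obtains K where "2 \<le> K" "\<And>k. K \<le> k \<Longrightarrow> c * real k / ln (real k) \<le> (\<Sum>i\<le>k. if prime i then v i else 0)"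
proof -
  from assms obtain x0 where x0: "\<And>x. x \<ge> x0 \<Longrightarrow> c * x / ln x \<le> (\<Sum>p | prime p \<and> real p \<le> x. v p)"
    by (auto simp: eventually_at_top_linorder)
  show ?thesis
  proof (rule that[of "max 2 (nat \<lceil>x0\<rceil>)"])
    fix k assume "max 2 (nat \<lceil>x0\<rceil>) \<le> k"
    then have "real k \<ge> x0" by linarith
    then show "c * real k / ln (real k) \<le> (\<Sum>i\<le>k. if prime i then v i else 0)"
      using x0[of "real k"] by (simp add: sum_primes_le_nat)
  qed simp
qed

lemma nat_floor_bounds:
  assumes "2 \<le> y"
  shows "y / 2 \<le> real (nat \<lfloor>y\<rfloor>)" "real (nat \<lfloor>y\<rfloor>) \<le> y" "y \<le> real (nat \<lfloor>y\<rfloor>) + 1"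
  using assms by linarith+

lemma prime_sum_lower_powr:
  fixes v :: "nat \<Rightarrow> real"
  assumes V: "\<forall>\<^sub>F x in at_top. c * x / ln x \<le> (\<Sum>p | prime p \<and> real p \<le> x. v p)"
    and c: "0 < c" and \<sigma>: "0 < \<sigma>" "\<sigma> < 1"
  shows "\<exists>B>0. \<forall>\<^sub>F y in at_top. B * (y powr (1 - \<sigma>) / ln y) \<le> (\<Sum>p | prime p \<and> real p \<le> y. v p / real p powr \<sigma>)"
proof -
  obtain K where K: "2 \<le> K"
    and VK: "\<And>k. K \<le> k \<Longrightarrow> c * real k / ln (real k) \<le> (\<Sum>i\<le>k. if prime i then v i else 0)"
    using prime_partial_sums_lower[OF V] by blast
  obtain A where A: "\<And>N. K \<le> N \<Longrightarrow> c * real N powr (1 - \<sigma>) / ln (real N) - A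
                         \<le> (\<Sum>k\<le>N. (if prime k then v k else 0) / real k powr \<sigma>)"
    using weighted_sum_lower_powr[OF \<sigma>(1) K c VK] by blast
  define b where "b = c * (1 / 2) powr (1 - \<sigma>)"
  have b: "0 < b" using c by (simp add: b_def)
  have "\<forall>\<^sub>F y in at_top. b / 2 * (y powr (1 - \<sigma>) / ln y) \<le> b * (y powr (1 - \<sigma>) / ln y) - A"
    using b \<sigma> by real_asymp
  moreover have "\<forall>\<^sub>F y in at_top. real K + 2 \<le> y" by (rule eventually_ge_at_top)
  ultimately have "\<forall>\<^sub>F y in at_top. b / 2 * (y powr (1 - \<sigma>) / ln y) \<le> (\<Sum>p | prime p \<and> real p \<le> y. v p / real p powr \<sigma>)"
  proof eventually_elim
    case (elim y)
    define N where "N = nat \<lfloor>y\<rfloor>"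
    have N: "y / 2 \<le> real N" "real N \<le> y" "K \<le> N"
      using nat_floor_bounds[of y] le_nat_floor[of K y] elim(2) unfolding N_def by auto
    have lnN: "0 < ln (real N)" "ln (real N) \<le> ln y"
      using N K by auto
    have "b * (y powr (1 - \<sigma>) / ln y) = c * (y / 2) powr (1 - \<sigma>) / ln y"
      using elim(2) by (simp add: b_def powr_divide)
    also have "\<dots> \<le> c * real N powr (1 - \<sigma>) / ln y"
      using N \<sigma> c elim(2) by (intro divide_right_mono mult_left_mono powr_mono2) auto
    also have "\<dots> \<le> c * real N powr (1 - \<sigma>) / ln (real N)"
      using lnN c by (intro divide_left_mono) auto
    also have "\<dots> \<le> (\<Sum>k\<le>N. (if prime k then v k else 0) / real k powr \<sigma>) + A"
      using A[OF N(3)] by linarith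
    also have "(\<Sum>k\<le>N. (if prime k then v k else 0) / real k powr \<sigma>)
                 = (\<Sum>p | prime p \<and> real p \<le> y. v p / real p powr \<sigma>)"
      unfolding sum_primes_le_eq_sum_atMost N_def by (rule sum.cong) auto
    finally show ?case
      using elim(1) by simp
  qed
  then show ?thesis using b by (intro exI[of _ "b / 2"]) auto
qed

lemma prime_sum_lower_ln_ln:
  fixes v :: "nat \<Rightarrow> real"
  assumes V: "\<forall>\<^sub>F x in at_top. c * x / ln x \<le> (\<Sum>p | prime p \<and> real p \<le> x. v p)" and c: "0 < c"
  shows "\<exists>B>0. \<forall>\<^sub>F y in at_top. B * ln (ln y) \<le> (\<Sum>p | prime p \<and> real p \<le> y. v p / real p)"
proof -
  obtain K where K: "2 \<le> K"
    and VK: "\<And>k. K \<le> k \<Longrightarrow> c * real k / ln (real k) \<le> (\<Sum>i\<le>k. if prime i then v i else 0)"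
    using prime_partial_sums_lower[OF V] by blast
  obtain A where A: "\<And>N. K \<le> N \<Longrightarrow> c * ln (ln (real N + 1)) - A \<le> (\<Sum>k\<le>N. (if prime k then v k else 0) / real k)"
    using weighted_sum_lower_ln_ln[OF K c VK] by blast
  have "\<forall>\<^sub>F y in at_top. c / 2 * ln (ln y) \<le> c * ln (ln y) - A"
    using c by real_asymp
  moreover have "\<forall>\<^sub>F y in at_top. real K + 2 \<le> y" by (rule eventually_ge_at_top)
  ultimately have "\<forall>\<^sub>F y in at_top. c / 2 * ln (ln y) \<le> (\<Sum>p | prime p \<and> real p \<le> y. v p / real p)"
  proof eventually_elim
    case (elim y)
    define N where "N = nat \<lfloor>y\<rfloor>"
    have N: "y \<le> real N + 1" "K \<le> N"
      using nat_floor_bounds[of y] le_nat_floor[of K y] elim(2) unfolding N_def by auto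
    have "c * ln (ln y) \<le> c * ln (ln (real N + 1))"
      using N elim(2) c by (intro mult_left_mono) auto
    also have "\<dots> \<le> (\<Sum>k\<le>N. (if prime k then v k else 0) / real k) + A"
      using A[OF N(2)] by linarith
    also have "(\<Sum>k\<le>N. (if prime k then v k else 0) / real k)
                 = (\<Sum>p | prime p \<and> real p \<le> y. v p / real p)"
      unfolding sum_primes_le_eq_sum_atMost N_def by (rule sum.cong) auto
    finally show ?case
      using elim(1) by simp
  qed
  then show ?thesis using c by (intro exI[of _ "c / 2"]) auto
qed

definition resonance_scale :: "real \<Rightarrow> real \<Rightarrow> real" where
  "resonance_scale \<sigma> T = (if \<sigma> < 1 then ln T powr (1 - \<sigma>) / ln (ln T) else ln (ln (ln T)))"

lemma prime_sum_lower_resonance_scale: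
  fixes v :: "nat \<Rightarrow> real"
  assumes V: "\<forall>\<^sub>F x in at_top. c * x / ln x \<le> (\<Sum>p | prime p \<and> real p \<le> x. v p)"
    and c: "0 < c" and \<beta>: "0 < \<beta>" and \<sigma>: "0 < \<sigma>" "\<sigma> \<le> 1"
  shows "\<exists>B>0. \<forall>\<^sub>F T in at_top.
           B * resonance_scale \<sigma> T \<le> (\<Sum>p | prime p \<and> real p \<le> \<beta> * ln T. v p / real p powr \<sigma>)"
proof -
  have y: "filterlim (\<lambda>T. \<beta> * ln T) at_top at_top"
    using \<beta> by real_asymp
  show ?thesis
  proof (cases "\<sigma> < 1")
    case True
    obtain B where B: "0 < B"
      and SB: "\<forall>\<^sub>F y in at_top. B * (y powr (1 - \<sigma>) / ln y) \<le> (\<Sum>p | prime p \<and> real p \<le> y. v p / real p powr \<sigma>)"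
      using prime_sum_lower_powr[OF V c \<sigma>(1) True] by blast
    define b where "b = B * \<beta> powr (1 - \<sigma>)"
    have b: "0 < b" using B \<beta> by (simp add: b_def)
    have "\<forall>\<^sub>F T in at_top. b / 2 * (ln T powr (1 - \<sigma>) / ln (ln T)) \<le> b * (ln T powr (1 - \<sigma>) / ln (\<beta> * ln T))"
      using b \<beta> True by real_asymp
    moreover have "\<forall>\<^sub>F T in at_top. B * ((\<beta> * ln T) powr (1 - \<sigma>) / ln (\<beta> * ln T))
                     \<le> (\<Sum>p | prime p \<and> real p \<le> \<beta> * ln T. v p / real p powr \<sigma>)"
      using filterlim_iff[THEN iffD1, OF y] SB by blast
    moreover have "\<forall>\<^sub>F T in at_top. 1 < (T::real)" by (rule eventually_gt_at_top)
    ultimately have "\<forall>\<^sub>F T in at_top. b / 2 * resonance_scale \<sigma> T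
                       \<le> (\<Sum>p | prime p \<and> real p \<le> \<beta> * ln T. v p / real p powr \<sigma>)"
    proof eventually_elim
      case (elim T)
      have "(\<beta> * ln T) powr (1 - \<sigma>) = \<beta> powr (1 - \<sigma>) * ln T powr (1 - \<sigma>)"
        using \<beta> elim(3) by (simp add: powr_mult)
      then show ?case
        using elim(1,2) True by (simp add: resonance_scale_def b_def mult_ac)
    qed
    then show ?thesis using b by (intro exI[of _ "b / 2"]) auto
  next
    case False
    then have \<sigma>1: "\<sigma> = 1" using \<sigma>(2) by simp
    obtain B where B: "0 < B"
      and SB: "\<forall>\<^sub>F y in at_top. B * ln (ln y) \<le> (\<Sum>p | prime p \<and> real p \<le> y. v p / real p)"
      using prime_sum_lower_ln_ln[OF V c] by blast
    have "\<forall>\<^sub>F T in at_top. B / 2 * ln (ln (ln T)) \<le> B * ln (ln (\<beta> * ln T))"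
      using B \<beta> by real_asymp
    moreover have "\<forall>\<^sub>F T in at_top. B * ln (ln (\<beta> * ln T)) \<le> (\<Sum>p | prime p \<and> real p \<le> \<beta> * ln T. v p / real p)"
      using filterlim_iff[THEN iffD1, OF y] SB by blast
    ultimately have "\<forall>\<^sub>F T in at_top. B / 2 * resonance_scale \<sigma> T
                       \<le> (\<Sum>p | prime p \<and> real p \<le> \<beta> * ln T. v p / real p powr \<sigma>)"
      by eventually_elim (simp add: resonance_scale_def \<sigma>1)
    then show ?thesis using B by (intro exI[of _ "B / 2"]) auto
  qed
qed

lemma diff_abs_mult_le_divide_one_plus:
  fixes Q t :: real
  assumes "0 \<le> t"
  shows "Q - \<bar>Q\<bar> * t \<le> Q / (1 + t)"
proof -
  have "Q - Q / (1 + t) = Q * t / (1 + t)"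
    using assms by (simp add: field_simps)
  also have "\<dots> \<le> \<bar>Q\<bar> * t / (1 + t)"
    using assms by (intro divide_right_mono mult_right_mono) auto
  also have "\<dots> \<le> \<bar>Q\<bar> * t / 1"
    using assms by (intro divide_left_mono) auto
  finally show ?thesis by simp
qed

lemma tendsto_prime_sum_cutoff:
  fixes u :: "nat \<Rightarrow> real"
  assumes lim: "((\<lambda>x. ln x / x * (\<Sum>p | prime p \<and> real p \<le> x. u p)) \<longlongrightarrow> L) at_top"
  shows "((\<lambda>x. ln x / x * (\<Sum>p | prime p \<and> real p \<le> x. if x0 \<le> real p then u p else 0)) \<longlongrightarrow> L) at_top"
proof -
  define E where "E = (\<Sum>p | prime p \<and> real p < x0. u p)"
  have split: "(\<Sum>p | prime p \<and> real p \<le> x. if x0 \<le> real p then u p else 0)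
                 = (\<Sum>p | prime p \<and> real p \<le> x. u p) - E" if x: "x0 \<le> x" for x
  proof -
    have fin: "finite {p. prime p \<and> real p \<le> x}"
      by (rule finite_subset[of _ "{..nat \<lfloor>x\<rfloor>}"]) (auto simp: le_nat_floor)
    have "(\<Sum>p | prime p \<and> real p \<le> x. if x0 \<le> real p then 0 else u p)
            = (\<Sum>p | prime p \<and> real p \<le> x. if real p < x0 then u p else 0)"
      by (rule sum.cong) auto
    also have "\<dots> = (\<Sum>p \<in> {p \<in> {p. prime p \<and> real p \<le> x}. real p < x0}. u p)"
      by (rule sum.inter_filter[OF fin, symmetric])
    also have "{p \<in> {p. prime p \<and> real p \<le> x}. real p < x0} = {p. prime p \<and> real p < x0}"
      using x by auto
    finally have small: "(\<Sum>p | prime p \<and> real p \<le> x. if x0 \<le> real p then 0 else u p) = E"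
      unfolding E_def .
    have "(\<Sum>p | prime p \<and> real p \<le> x. u p)
            = (\<Sum>p | prime p \<and> real p \<le> x. (if x0 \<le> real p then u p else 0) + (if x0 \<le> real p then 0 else u p))"
      by (rule sum.cong) auto
    then show ?thesis
      unfolding sum.distrib small by simp
  qed
  have "((\<lambda>x. ln x / x * (\<Sum>p | prime p \<and> real p \<le> x. u p) - ln x / x * E) \<longlongrightarrow> L - 0 * E) at_top"
    by (intro tendsto_diff tendsto_mult lim tendsto_const) real_asymp
  then have "((\<lambda>x. ln x / x * (\<Sum>p | prime p \<and> real p \<le> x. u p) - ln x / x * E) \<longlongrightarrow> L) at_top"
    by simp
  then show ?thesis
    by (rule Lim_transform_eventually)
       (use eventually_ge_at_top[of x0] in \<open>eventually_elim, simp add: split right_diff_distrib\<close>)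
qed

lemma eventually_ge_of_tendsto_ln_div:
  fixes S :: "real \<Rightarrow> real"
  assumes "((\<lambda>x. ln x / x * S x) \<longlongrightarrow> k) at_top" "0 < k"
  shows "\<forall>\<^sub>F x in at_top. k / 2 * x / ln x \<le> S x"
proof -
  have "\<forall>\<^sub>F x in at_top. k / 2 < ln x / x * S x"
    using assms by (intro order_tendstoD(1)) auto
  with eventually_gt_at_top[of 1] show ?thesis
  proof eventually_elim
    case (elim x)
    then have pos: "0 < ln x / x" by simp
    have "k / 2 * x / ln x = (k / 2) / (ln x / x)" by simp
    also have "\<dots> < S x"
      using elim(2) pos pos_divide_less_eq by (metis mult.commute)
    finally show ?case by simp
  qed
qed

lemma eventually_div_power2_le:
  fixes f :: "'a \<Rightarrow> real"
  assumes "finite I" "\<And>h. h \<in> I \<Longrightarrow> 0 < f h"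
  shows "\<forall>\<^sub>F C in at_top. \<forall>h\<in>I. K / C\<^sup>2 \<le> f h"
proof (rule eventually_ball_finite[OF assms(1) ballI])
  fix h assume "h \<in> I"
  have "((\<lambda>C::real. K / C\<^sup>2) \<longlongrightarrow> 0) at_top" by real_asymp
  then have "\<forall>\<^sub>F C in at_top. K / C\<^sup>2 < f h"
    using assms(2)[OF \<open>h \<in> I\<close>] by (intro order_tendstoD(2))
  then show "\<forall>\<^sub>F C in at_top. K / C\<^sup>2 \<le> f h"
    by (rule eventually_mono) (rule less_imp_le)
qed

locale resonator =
  fixes H G :: nat and a :: "nat \<Rightarrow> nat \<Rightarrow> complex" and \<kappa> :: "nat \<Rightarrow> nat \<Rightarrow> complex"
    and C D \<beta> xe :: real
  assumes lim: "\<And>h g. h \<in> {1..H+G} \<Longrightarrow> g \<in> {1..H+G} \<Longrightarrow>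
      ((\<lambda>x. of_real (ln x / x) * (\<Sum>p | prime p \<and> real p \<le> x. a h p * cnj (a g p))) \<longlongrightarrow> \<kappa> h g) at_top"
    and kappa_offdiag: "\<And>h g. h \<in> {1..H+G} \<Longrightarrow> g \<in> {1..H+G} \<Longrightarrow> h \<noteq> g \<Longrightarrow> \<kappa> h g = 0"
    and coeff_bound: "\<And>g p. g \<in> {1..H+G} \<Longrightarrow> prime p \<Longrightarrow> norm (a g p) \<le> D"
    and C_pos: "0 < C"
    and \<beta>_pos: "0 < \<beta>"
begin

definition sign :: "nat \<Rightarrow> real" where
  "sign g = (if g \<le> H then 1 else -1)"

definition penalty :: real where
  "penalty = real (H + G) ^ 2 * D ^ 2 / C ^ 2"

lemma abs_sign [simp]: "\<bar>sign g\<bar> = 1"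
  by (simp add: sign_def)

definition main_term :: "nat \<Rightarrow> nat \<Rightarrow> real" where
  "main_term h p = Re ((\<Sum>g\<in>{1..H+G}. of_real (sign g * sign h) * (a h p * cnj (a g p)))
                       - of_real penalty * (\<Sum>g\<in>{1..H+G}. a g p * cnj (a g p)))"

lemma rcoef_eq:
  "rcoef a H G C xe \<beta> T p = (if prime p \<and> xe \<le> real p \<and> real p \<le> \<beta> * ln T
     then (\<Sum>g\<in>{1..H+G}. of_real (sign g) * a g p) / of_real C else 0)"
proof -
  have "(\<Sum>g\<in>{1..H+G}. of_real (sign g) * a g p)
          = (\<Sum>g\<in>{1..H}. of_real (sign g) * a g p) + (\<Sum>g\<in>{H<..H+G}. of_real (sign g) * a g p)"
    by (subst sum.union_disjoint[symmetric]) (auto intro: sum.cong)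
  also have "\<dots> = (\<Sum>g\<in>{1..H}. a g p) - (\<Sum>g\<in>{H<..H+G}. a g p)"
    by (simp add: sign_def sum_negf[symmetric])
  finally show ?thesis by (simp add: rcoef_def)
qed

lemma tendsto_main_term:
  assumes h: "h \<in> {1..H+G}"
  shows "((\<lambda>x. ln x / x * (\<Sum>p | prime p \<and> real p \<le> x. main_term h p))
           \<longlongrightarrow> Re (\<kappa> h h) - penalty * (\<Sum>g\<in>{1..H+G}. Re (\<kappa> g g))) at_top"
proof -
  define I where "I = {1..H+G}"
  define S where "S h g x = of_real (ln x / x) * (\<Sum>p | prime p \<and> real p \<le> x. a h p * cnj (a g p))"
    for h g and x :: real
  define \<Phi> where "\<Phi> p = (\<Sum>g\<in>I. of_real (sign g * sign h) * (a h p * cnj (a g p)))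
                          - of_real penalty * (\<Sum>g\<in>I. a g p * cnj (a g p))" for p
  have complex_eq: "of_real (ln x / x) * (\<Sum>p | prime p \<and> real p \<le> x. \<Phi> p)
          = (\<Sum>g\<in>I. of_real (sign g * sign h) * S h g x) - of_real penalty * (\<Sum>g\<in>I. S g g x)" for x
    unfolding S_def \<Phi>_def
    by (simp add: sum_subtractf sum_distrib_left sum.swap[of _ I] algebra_simps)
  have eq: "ln x / x * (\<Sum>p | prime p \<and> real p \<le> x. main_term h p)
                   = Re ((\<Sum>g\<in>I. of_real (sign g * sign h) * S h g x) - of_real penalty * (\<Sum>g\<in>I. S g g x))"
    for x
  proof -
    have Re_of_real_mult: "Re (of_real r * z) = r * Re z" for r z by simp
    have "ln x / x * (\<Sum>p | prime p \<and> real p \<le> x. main_term h p)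
            = Re (of_real (ln x / x) * (\<Sum>p | prime p \<and> real p \<le> x. \<Phi> p))"
      by (simp only: Re_of_real_mult Re_sum main_term_def \<Phi>_def I_def)
    then show ?thesis by (simp only: complex_eq)
  qed
  have tendsto: "((\<lambda>x. Re ((\<Sum>g\<in>I. of_real (sign g * sign h) * S h g x) - of_real penalty * (\<Sum>g\<in>I. S g g x)))
          \<longlongrightarrow> Re ((\<Sum>g\<in>I. of_real (sign g * sign h) * \<kappa> h g) - of_real penalty * (\<Sum>g\<in>I. \<kappa> g g))) at_top"
    unfolding S_def using h by (intro tendsto_Re tendsto_diff tendsto_mult tendsto_sum tendsto_const lim) (auto simp: I_def)
  have diagonal: "(\<Sum>g\<in>I. of_real (sign g * sign h) * \<kappa> h g) = \<kappa> h h"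
  proof -
    have "(\<Sum>g\<in>I. of_real (sign g * sign h) * \<kappa> h g) = (\<Sum>g\<in>I. if g = h then \<kappa> h h else 0)"
      using h kappa_offdiag[OF h] by (intro sum.cong) (auto simp: sign_def I_def)
    then show ?thesis using h by (simp add: I_def)
  qed
  have limit_value: "Re (\<kappa> h h - of_real penalty * (\<Sum>g\<in>I. \<kappa> g g))
                   = Re (\<kappa> h h) - penalty * (\<Sum>g\<in>{1..H+G}. Re (\<kappa> g g))"
    by (simp add: I_def)
  from tendsto show ?thesis
    unfolding eq diagonal limit_value .
qed

definition resonator_sum :: "real \<Rightarrow> nat \<Rightarrow> real \<Rightarrow> real" where
  "resonator_sum \<sigma> h T = (\<Sum>p | prime p \<and> real p \<le> \<beta> * ln T.
     Re (cnj (rcoef a H G C xe \<beta> T p) * a h p) / ((1 + (norm (rcoef a H G C xe \<beta> T p))\<^sup>2) * real p powr \<sigma>))"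

lemma norm_signed_sum_le:
  assumes "prime p"
  shows "norm (\<Sum>g\<in>{1..H+G}. of_real (sign g) * a g p) \<le> real (H + G) * D"
    and "(norm (\<Sum>g\<in>{1..H+G}. of_real (sign g) * a g p))\<^sup>2 \<le> real (H + G) * (\<Sum>g\<in>{1..H+G}. (norm (a g p))\<^sup>2)"
proof -
  have le_sum: "norm (\<Sum>g\<in>{1..H+G}. of_real (sign g) * a g p) \<le> (\<Sum>g\<in>{1..H+G}. norm (a g p))"
    by (rule order_trans[OF norm_sum]) (simp add: norm_mult)
  also have "\<dots> \<le> (\<Sum>g\<in>{1..H+G}. D)"
    using coeff_bound[OF _ assms] by (intro sum_mono) auto
  finally show "norm (\<Sum>g\<in>{1..H+G}. of_real (sign g) * a g p) \<le> real (H + G) * D"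
    by simp
  have "(norm (\<Sum>g\<in>{1..H+G}. of_real (sign g) * a g p))\<^sup>2 \<le> (\<Sum>g\<in>{1..H+G}. norm (a g p))\<^sup>2"
    using le_sum by (intro power_mono) auto
  also have "\<dots> \<le> (\<Sum>g\<in>{1..H+G}. (norm (a g p))\<^sup>2) * real (H + G)"
    using sum_squared_le_sum_of_squares[of "\<lambda>g. norm (a g p)" "{1..H+G}"] by simp
  finally show "(norm (\<Sum>g\<in>{1..H+G}. of_real (sign g) * a g p))\<^sup>2 \<le> real (H + G) * (\<Sum>g\<in>{1..H+G}. (norm (a g p))\<^sup>2)"
    by (simp add: mult.commute)
qed

text \<open>With \<open>R = C r(p)\<close> and \<open>t = |r(p)|\<^sup>2\<close>, the weight \<open>1 / (1 + t)\<close> costs at most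
  \<open>|Re (cnj R a\<^sub>h(p))| t\<close>, which the bound on the coefficients turns into the penalty term.\<close>

lemma main_term_le_resonator_term:
  assumes h: "h \<in> {1..H+G}" and p: "prime p" "real p \<le> \<beta> * ln T"
  shows "(if xe \<le> real p then main_term h p else 0) / (C * real p powr \<sigma>)
           \<le> sign h * (Re (cnj (rcoef a H G C xe \<beta> T p) * a h p) /
                        ((1 + (norm (rcoef a H G C xe \<beta> T p))\<^sup>2) * real p powr \<sigma>))"
proof (cases "xe \<le> real p")
  case False
  then show ?thesis by (simp add: rcoef_eq)
next
  case True
  define M where "M = real (H + G)"
  define R where "R = (\<Sum>g\<in>{1..H+G}. of_real (sign g) * a g p)"
  define Q where "Q = Re (cnj R * (of_real (sign h) * a h p))"
  define t where "t = (norm R)\<^sup>2 / C\<^sup>2"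
  define E where "E = penalty * (\<Sum>g\<in>{1..H+G}. (norm (a g p))\<^sup>2)"
  have D: "0 \<le> D" using coeff_bound[OF h p(1)] norm_ge_zero order_trans by blast
  have t: "0 \<le> t" by (simp add: t_def)
  have "\<bar>Q\<bar> \<le> norm R * norm (a h p)"
    using abs_Re_le_cmod[of "cnj R * (of_real (sign h) * a h p)"] by (simp only: Q_def norm_mult) simp
  also have "\<dots> \<le> M * D * D"
    using norm_signed_sum_le(1)[OF p(1)] coeff_bound[OF h p(1)] D by (intro mult_mono) (auto simp: M_def R_def)
  finally have "\<bar>Q\<bar> * t \<le> M * D * D * (M * (\<Sum>g\<in>{1..H+G}. (norm (a g p))\<^sup>2) / C\<^sup>2)"
    using norm_signed_sum_le(2)[OF p(1)] D t
    by (intro mult_mono) (auto simp: M_def R_def t_def divide_right_mono)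
  also have "\<dots> = E"
    by (simp add: E_def penalty_def M_def power2_eq_square)
  finally have QE: "\<bar>Q\<bar> * t \<le> E" .
  have "sign h * (Re (cnj (R / of_real C) * a h p) / ((1 + (norm (R / of_real C))\<^sup>2) * real p powr \<sigma>))
          = Q / (1 + t) / (C * real p powr \<sigma>)"
    using C_pos by (simp add: Q_def t_def norm_divide power_divide Re_divide_of_real field_simps)
  also have "\<dots> \<ge> (Q - E) / (C * real p powr \<sigma>)"
    using diff_abs_mult_le_divide_one_plus[OF t, of Q] QE C_pos prime_gt_0_nat[OF p(1)]
    by (intro divide_right_mono) auto
  also have "Q - E = main_term h p"
    by (simp add: Q_def E_def R_def main_term_def sum_distrib_left sum_distrib_right algebra_simps
        flip: complex_norm_square)
  finally show ?thesis
    using True p by (simp add: rcoef_eq R_def)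
qed

lemma resonator_sum_lower:
  assumes h: "h \<in> {1..H+G}" and kh: "0 < Re (\<kappa> h h)"
    and small: "penalty * (\<Sum>g\<in>{1..H+G}. Re (\<kappa> g g)) \<le> Re (\<kappa> h h) / 2"
    and \<sigma>: "0 < \<sigma>" "\<sigma> \<le> 1"
  shows "\<exists>B>0. \<forall>\<^sub>F T in at_top. B * resonance_scale \<sigma> T \<le> sign h * resonator_sum \<sigma> h T"
proof -
  define k where "k = Re (\<kappa> h h) - penalty * (\<Sum>g\<in>{1..H+G}. Re (\<kappa> g g))"
  have k: "0 < k" using kh small by (simp add: k_def)
  define v where "v p = (if xe \<le> real p then main_term h p else 0)" for p
  have "((\<lambda>x. ln x / x * (\<Sum>p | prime p \<and> real p \<le> x. v p)) \<longlongrightarrow> k) at_top"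
    unfolding v_def k_def by (rule tendsto_prime_sum_cutoff[OF tendsto_main_term[OF h]])
  from eventually_ge_of_tendsto_ln_div[OF this k] have
    "\<forall>\<^sub>F x in at_top. k / 2 * x / ln x \<le> (\<Sum>p | prime p \<and> real p \<le> x. v p)" .
  moreover have "0 < k / 2" using k by simp
  ultimately obtain B where B: "0 < B"
    and lower: "\<forall>\<^sub>F T in at_top. B * resonance_scale \<sigma> T
                  \<le> (\<Sum>p | prime p \<and> real p \<le> \<beta> * ln T. v p / real p powr \<sigma>)"
    using prime_sum_lower_resonance_scale[OF _ _ \<beta>_pos \<sigma>] by blast
  from lower have upper: "\<forall>\<^sub>F T in at_top. B / C * resonance_scale \<sigma> T \<le> sign h * resonator_sum \<sigma> h T"
  proof eventually_elim
    case (elim T)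
    have "B / C * resonance_scale \<sigma> T \<le> (\<Sum>p | prime p \<and> real p \<le> \<beta> * ln T. v p / real p powr \<sigma>) / C"
      using elim C_pos by (simp add: divide_right_mono)
    also have "\<dots> = (\<Sum>p | prime p \<and> real p \<le> \<beta> * ln T. v p / (C * real p powr \<sigma>))"
      by (simp add: sum_divide_distrib mult.commute)
    also have "\<dots> \<le> sign h * resonator_sum \<sigma> h T"
      unfolding resonator_sum_def sum_distrib_left v_def
      by (intro sum_mono main_term_le_resonator_term[OF h]) auto
    finally show ?case .
  qed
  then show ?thesis
    using divide_pos_pos[OF B C_pos] by blast
qed

lemma resonator_sums_lower:
  assumes kh: "\<And>h. h \<in> {1..H+G} \<Longrightarrow> 0 < Re (\<kappa> h h)"
    and small: "\<And>h. h \<in> {1..H+G} \<Longrightarrow>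
                  real (H + G) ^ 2 * D ^ 2 * (\<Sum>g\<in>{1..H+G}. Re (\<kappa> g g)) / C ^ 2 \<le> Re (\<kappa> h h) / 2"
    and \<sigma>: "0 < \<sigma>" "\<sigma> \<le> 1"
  shows "\<exists>B::nat \<Rightarrow> real. (\<forall>h\<in>{1..H+G}. B h > 0) \<and>
           (\<forall>\<^sub>F T in at_top. \<forall>h\<in>{1..H+G}.
              (-1::real) ^ (if h \<le> H then 1 else 0) *
              (\<Sum>p | prime p \<and> real p \<le> \<beta> * ln T.
                 Re (cnj (rcoef a H G C xe \<beta> T p) * a h p) /
                 ((1 + (norm (rcoef a H G C xe \<beta> T p))\<^sup>2) * real p powr \<sigma>))
              \<le> (if \<sigma> < 1 then - B h * ln T powr (1 - \<sigma>) / ln (ln T)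
                 else - B h * ln (ln (ln T))))"
proof -
  have "\<forall>h\<in>{1..H+G}. \<exists>B>0. \<forall>\<^sub>F T in at_top. B * resonance_scale \<sigma> T \<le> sign h * resonator_sum \<sigma> h T"
  proof
    fix h assume h: "h \<in> {1..H+G}"
    have "penalty * (\<Sum>g\<in>{1..H+G}. Re (\<kappa> g g)) \<le> Re (\<kappa> h h) / 2"
      using small[OF h] by (simp add: penalty_def)
    then show "\<exists>B>0. \<forall>\<^sub>F T in at_top. B * resonance_scale \<sigma> T \<le> sign h * resonator_sum \<sigma> h T"
      using resonator_sum_lower[OF h kh[OF h] _ \<sigma>] by blast
  qed
  from bchoice[OF this] obtain B where
    B: "\<forall>h\<in>{1..H+G}. 0 < B h \<and> (\<forall>\<^sub>F T in at_top. B h * resonance_scale \<sigma> T \<le> sign h * resonator_sum \<sigma> h T)" ..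
  then have lower: "\<forall>\<^sub>F T in at_top. \<forall>h\<in>{1..H+G}. B h * resonance_scale \<sigma> T \<le> sign h * resonator_sum \<sigma> h T"
    by (intro eventually_ball_finite) auto
  have sign_flip: "(-1::real) ^ (if h \<le> H then 1 else 0) * resonator_sum \<sigma> h T
                   \<le> (if \<sigma> < 1 then - B h * ln T powr (1 - \<sigma>) / ln (ln T) else - B h * ln (ln (ln T)))"
    if "B h * resonance_scale \<sigma> T \<le> sign h * resonator_sum \<sigma> h T" for h T
    using that by (auto simp: sign_def resonance_scale_def)
  from lower have upper: "\<forall>\<^sub>F T in at_top. \<forall>h\<in>{1..H+G}. (-1::real) ^ (if h \<le> H then 1 else 0) * resonator_sum \<sigma> h T
                     \<le> (if \<sigma> < 1 then - B h * ln T powr (1 - \<sigma>) / ln (ln T) else - B h * ln (ln (ln T)))"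
    by (rule eventually_mono) (blast intro: sign_flip)
  show ?thesis
    by (rule exI[of _ B], rule conjI) (use B in blast, fact upper[unfolded resonator_sum_def])
qed

end

theorem lemma9:
  fixes H G :: nat and a :: "nat \<Rightarrow> nat \<Rightarrow> complex" and \<kappa> :: "nat \<Rightarrow> nat \<Rightarrow> complex"
    and \<alpha> \<beta> \<sigma> :: real
  assumes Lh: "\<forall>h\<in>{1..H+G}. S_poly (a h) \<and> ramanujan (a h)"
    and lim: "\<forall>h\<in>{1..H+G}. \<forall>g\<in>{1..H+G}.
              ((\<lambda>x::real. of_real (ln x / x) * (\<Sum>p | prime p \<and> real p \<le> x. a h p * cnj (a g p)))
                 \<longlongrightarrow> \<kappa> h g) at_top"
    and kdiag: "\<forall>h\<in>{1..H+G}. \<kappa> h h \<in> \<real> \<and> Re (\<kappa> h h) > 0"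
    and koff: "\<forall>h\<in>{1..H+G}. \<forall>g\<in>{1..H+G}. h \<noteq> g \<longrightarrow> \<kappa> h g = 0"
    and "0 < \<alpha>" "\<alpha> < 1" "0 < \<beta>" "\<beta> < \<alpha> / 2"
    and "0 < \<sigma>" "\<sigma> \<le> 1"
  shows "\<exists>\<epsilon>0>0. \<forall>\<epsilon>. 0 < \<epsilon> \<and> \<epsilon> < \<epsilon>0 \<longrightarrow>
          (\<exists>C0. \<forall>C\<ge>C0. \<forall>xe::real.
            (\<forall>x\<ge>xe. \<forall>h\<in>{1..H+G}.
               \<bar>(\<Sum>p | prime p \<and> real p \<le> x. (norm (a h p))\<^sup>2) - Re (\<kappa> h h) * x / ln x\<bar> \<le> \<epsilon> * x / ln x \<and>
               norm (\<Sum>g\<in>{1..H+G} - {h}. \<Sum>p | prime p \<and> real p \<le> x. a h p * a g p) \<le> \<epsilon> * x / ln x)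
            \<longrightarrow>
            (\<exists>B::nat \<Rightarrow> real. (\<forall>h\<in>{1..H+G}. B h > 0) \<and>
               (\<forall>\<^sub>F T in at_top. \<forall>h\<in>{1..H+G}.
                  (-1::real) ^ (if h \<le> H then 1 else 0) *
                  (\<Sum>p | prime p \<and> real p \<le> \<beta> * ln T.
                     Re (cnj (rcoef a H G C xe \<beta> T p) * a h p) /
                     ((1 + (norm (rcoef a H G C xe \<beta> T p))\<^sup>2) * real p powr \<sigma>))
                  \<le> (if \<sigma> < 1 then - B h * ln T powr (1 - \<sigma>) / ln (ln T)
                     else - B h * ln (ln (ln T))))))"
proof -
  obtain D where D: "\<forall>g\<in>{1..H+G}. \<forall>p. prime p \<longrightarrow> norm (a g p) \<le> D"
    using S_poly_ramanujan_uniform_coeff_bound[OF finite_atLeastAtMost Lh] by blast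
  define K where "K = real (H + G) ^ 2 * D ^ 2 * (\<Sum>g\<in>{1..H+G}. Re (\<kappa> g g))"
  have "\<forall>\<^sub>F C in at_top. \<forall>h\<in>{1..H+G}. K / C\<^sup>2 \<le> Re (\<kappa> h h) / 2"
    using kdiag by (intro eventually_div_power2_le) auto
  from eventually_conj[OF eventually_gt_at_top[of 0] this] obtain C0
    where C0: "\<And>C. C0 \<le> C \<Longrightarrow> 0 < C \<and> (\<forall>h\<in>{1..H+G}. K / C\<^sup>2 \<le> Re (\<kappa> h h) / 2)"
    unfolding eventually_at_top_linorder by blast
  have resonator: "resonator H G a \<kappa> C D \<beta>" if C: "C0 \<le> C" for C
  proof
    show "((\<lambda>x. of_real (ln x / x) * (\<Sum>p | prime p \<and> real p \<le> x. a h p * cnj (a g p))) \<longlongrightarrow> \<kappa> h g) at_top"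
      if "h \<in> {1..H+G}" "g \<in> {1..H+G}" for h g
      using lim that by blast
    show "\<kappa> h g = 0" if "h \<in> {1..H+G}" "g \<in> {1..H+G}" "h \<noteq> g" for h g
      using koff that by blast
    show "norm (a g p) \<le> D" if "g \<in> {1..H+G}" "prime p" for g p
      using D that by blast
    show "0 < C" using C0[OF C] by blast
  qed (rule \<open>0 < \<beta>\<close>)
  show ?thesis
    by (rule exI[of _ 1], intro conjI allI impI, simp, rule exI[of _ C0], intro allI impI,
        rule resonator.resonator_sums_lower[OF resonator])
       (assumption | use kdiag in blast | use C0[unfolded K_def] in blast | use \<open>0 < \<sigma>\<close> \<open>\<sigma> \<le> 1\<close> in blast)+
qed

end
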